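(* Let $f,g\in G_B^I$. Then $f\boxtimes g\in G_B^I$ and the S-transform satisfies $$S_{f\boxtimes g}=S_g\cdot\big(S_f\circ(S_g^{-1}\cdot I\cdot S_g)\big),$$ where $S_g^{-1}$ denotes the multiplicative inverse of $S_g$ in $G_B^{\mathrm{inv}}$.
   Context: Let $B$ be a unital algebra over a field $\mathbb K$ of characteristic zero. $\mathrm{Mult}[[B]]$ is the set of sequences $f=(f_n)_{n\ge0}$ of $\mathbb K$-multilinear maps $f_n:B^{n}\to B$ (so $f_0\in B$). Product: $(f\cdot g)_n(x_1,\dots,x_n)=\sum_{k=0}^n f_k(x_1,\dots,x_k)\,g_{n-k}(x_{k+1},\dots,x_n)$, with unit $1=(\delta_{n,0}1_B)_n$. For $g$ with $g_0=0$, composition: $(f\circ g)_n(x_1,\dots,x_n)=\sum_{l\ge0}\sum_{k_1+\dots+k_l=n,\,k_i\ge1} f_l\big(g_{k_1}(x_1,\dots,x_{k_1}),\dots,g_{k_l}(x_{n-k_l+1},\dots,x_n)\big)$, with unit $I=(\delta_{n,1}\mathrm{id}_B)_n$. Composition binds tighter than product. $G_B^{\mathrm{inv}}=\{f: f_0\in B^\times\}$ is a group under $\cdot$; $G_B^{\mathrm{dif}}=\{f: f_0=0,\ f_1\in GL(B)\}$ is a group under $\circ$ (inverse $f^{\circ-1}$); $G_B^I=\{I\cdot F: F\in G_B^{\mathrm{inv}}\}\subseteq G_B^{\mathrm{dif}}$, where $(I\cdot F)_n(x_1,\dots,x_n)=x_1F_{n-1}(x_2,\dots,x_n)$. For $f\in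 G_B^I$, one has $f^{\circ-1}\in G_B^I$, and the S-transform $S_f\in G_B^{\mathrm{inv}}$ is defined by $f^{\circ-1}=I\cdot S_f$. Planar binary trees: $Y_0=\{|\}$ (the empty tree) and for $n\ge1$, $Y_n=\{\sigma\vee\tau:\sigma\in Y_k,\tau\in Y_l,k+l=n-1\}$, where $\sigma\vee\tau$ is the tree with a root whose left subtree is $\sigma$ and right subtree is $\tau$; $|\tau|$ is the number of internal vertices; $Y=\bigcup_n Y_n$. Every $\tau\in Y_n$, $n\ge1$, is uniquely written $\tau=\tau_1\vee(\tau_2\vee(\cdots\vee(\tau_k\vee|)\cdots))$ with $k\ge1$; put $j_i=|\tau_1|+\dots+|\tau_i|+i$ (so $j_0=0$, $j_k=n$). For $f,g\in\mathrm{Mult}[[B]]$ define recursively $(f\cup g)_|=1$ and $(f\cup g)_\tau(x_1,\dots,x_n)=g_k\big((g\cup f)_{\tau_1}(x_1,\dots,x_{j_1-1})x_{j_1},\ \dots,\ (g\cup f)_{\tau_k}(x_{j_{k-1}+1},\dots,x_{j_k-1})x_{j_k}\big)$ (the roles of $f,g$ alternate at each level). Define $R:Y\to Y$ by $R(|)=|$, $R(\sigma\vee\tau)=(|\vee R(\sigma))\vee R(\tau)$ (so $|R(\tau)|=2|\tau|$). The boxed convolution $f\boxtimes g\in\mathrm{Mult}[[B]]$ is $(f\boxtimes g)_0=g_0$ and for $n\ge1$, $(f\boxtimes g)_n(x_1,\dots,x_n)=\sum_{\tau\in Y_n}(f\cup g)_{R(\tau)}(x_1,1,x_2,1,\dots,x_n,1)$.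 *)

theory Defs
  imports Complex_Main
begin

text \<open>The unital K-algebra B is a type 'b of class ring_1 together with
a scalar multiplication scale :: 'k => 'b => 'b by a field 'k of characteristic zero,
making B a K-module whose multiplication is K-bilinear.
An element f of Mult[[B]] is represented as a function f :: 'b list => 'b, where
f applied to a list of length n is the n-th component f_n (so f [] = f_0).\<close>

definition algebra_over :: "('k::field_char_0 \<Rightarrow> 'b::ring_1 \<Rightarrow> 'b) \<Rightarrow> bool" where
  "algebra_over scale \<longleftrightarrow> module scale \<and>
     (\<forall>c x y. scale c (x * y) = scale c x * y \<and> scale c (x * y) = x * scale c y)"

definition multilinear :: "('k \<Rightarrow> 'b \<Rightarrow> 'b) \<Rightarrow> ('b::ring_1 list \<Rightarrow> 'b) \<Rightarrow> nat \<Rightarrow> bool" where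
  "multilinear scale F n \<longleftrightarrow>
     (\<forall>xs i a b c. length xs = n \<and> i < n \<longrightarrow>
        F (xs[i := a + b]) = F (xs[i := a]) + F (xs[i := b]) \<and>
        F (xs[i := scale c a]) = scale c (F (xs[i := a])))"

definition Mult :: "('k \<Rightarrow> 'b \<Rightarrow> 'b) \<Rightarrow> ('b::ring_1 list \<Rightarrow> 'b) set" where
  "Mult scale = {f. \<forall>n. multilinear scale f n}"

definition mprod :: "('b::ring_1 list \<Rightarrow> 'b) \<Rightarrow> ('b list \<Rightarrow> 'b) \<Rightarrow> 'b list \<Rightarrow> 'b" where
  "mprod f g xs = (\<Sum>k = 0..length xs. f (take k xs) * g (drop k xs))"

definition mone :: "'b::ring_1 list \<Rightarrow> 'b" where
  "mone xs = (if xs = [] then 1 else 0)"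

text \<open>Splittings of a list into consecutive nonempty blocks (ordered compositions).\<close>
function blocks :: "'a list \<Rightarrow> 'a list list list" where
  "blocks [] = [[]]"
| "blocks (x # xs) =
     concat (map (\<lambda>k. map (\<lambda>bs. take k (x # xs) # bs) (blocks (drop k (x # xs))))
                 [1..<length xs + 2])"
  by pat_completeness auto
termination
  by (relation "measure length") auto

definition mcomp :: "('b::ring_1 list \<Rightarrow> 'b) \<Rightarrow> ('b list \<Rightarrow> 'b) \<Rightarrow> 'b list \<Rightarrow> 'b" where
  "mcomp f g xs = sum_list (map (\<lambda>bs. f (map g bs)) (blocks xs))"

definition mI :: "'b::ring_1 list \<Rightarrow> 'b" where
  "mI xs = (if length xs = 1 then hd xs else 0)"

definition is_unit_ring :: "'b::ring_1 \<Rightarrow> bool" where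
  "is_unit_ring x \<longleftrightarrow> (\<exists>y. x * y = 1 \<and> y * x = 1)"

definition G_inv :: "('k \<Rightarrow> 'b \<Rightarrow> 'b) \<Rightarrow> ('b::ring_1 list \<Rightarrow> 'b) set" where
  "G_inv scale = {f \<in> Mult scale. is_unit_ring (f [])}"

text \<open>f_1 in GL(B): f_1 is linear (by multilinearity) and bijective.\<close>
definition G_dif :: "('k \<Rightarrow> 'b \<Rightarrow> 'b) \<Rightarrow> ('b::ring_1 list \<Rightarrow> 'b) set" where
  "G_dif scale = {f \<in> Mult scale. f [] = 0 \<and> bij (\<lambda>x. f [x])}"

definition G_I :: "('k \<Rightarrow> 'b \<Rightarrow> 'b) \<Rightarrow> ('b::ring_1 list \<Rightarrow> 'b) set" where
  "G_I scale = {mprod mI F | F. F \<in> G_inv scale}"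

definition minv :: "('k \<Rightarrow> 'b \<Rightarrow> 'b) \<Rightarrow> ('b::ring_1 list \<Rightarrow> 'b) \<Rightarrow> 'b list \<Rightarrow> 'b" where
  "minv scale f = (THE h. h \<in> Mult scale \<and> mprod f h = mone \<and> mprod h f = mone)"

definition cinv :: "('k \<Rightarrow> 'b \<Rightarrow> 'b) \<Rightarrow> ('b::ring_1 list \<Rightarrow> 'b) \<Rightarrow> 'b list \<Rightarrow> 'b" where
  "cinv scale f = (THE h. h \<in> G_dif scale \<and> mcomp f h = mI \<and> mcomp h f = mI)"

definition S_transform :: "('k \<Rightarrow> 'b \<Rightarrow> 'b) \<Rightarrow> ('b::ring_1 list \<Rightarrow> 'b) \<Rightarrow> 'b list \<Rightarrow> 'b" where
  "S_transform scale f = (THE F. F \<in> G_inv scale \<and> cinv scale f = mprod mI F)"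

text \<open>Planar binary trees; the number of internal vertices is the datatype size.\<close>
datatype tree = Leaf | Node tree tree

text \<open>cup f g tau and the argument list along the right spine of tau
(the roles of f and g alternate at each level).\<close>
function cup :: "('b::ring_1 list \<Rightarrow> 'b) \<Rightarrow> ('b list \<Rightarrow> 'b) \<Rightarrow> tree \<Rightarrow> 'b list \<Rightarrow> 'b"
  and cup_args :: "('b::ring_1 list \<Rightarrow> 'b) \<Rightarrow> ('b list \<Rightarrow> 'b) \<Rightarrow> tree \<Rightarrow> 'b list \<Rightarrow> 'b list" where
  "cup f g Leaf xs = 1"
| "cup f g (Node l r) xs = g (cup_args f g (Node l r) xs)"
| "cup_args f g Leaf xs = []"
| "cup_args f g (Node l r) xs =
     (cup g f l (take (size l) xs) * xs ! (size l)) # cup_args f g r (drop (size l + 1) xs)"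
  by pat_completeness auto
termination
  by (relation "measure (\<lambda>p. case p of Inl (f, g, t, xs) \<Rightarrow> 2 * size t + 1
                                    | Inr (f, g, t, xs) \<Rightarrow> 2 * size t)") auto

fun Rt :: "tree \<Rightarrow> tree" where
  "Rt Leaf = Leaf"
| "Rt (Node s t) = Node (Node Leaf (Rt s)) (Rt t)"

definition boxconv :: "('b::ring_1 list \<Rightarrow> 'b) \<Rightarrow> ('b list \<Rightarrow> 'b) \<Rightarrow> 'b list \<Rightarrow> 'b" where
  "boxconv f g xs = (if xs = [] then g []
     else (\<Sum>\<tau> \<in> {t. size t = length xs}. cup f g (Rt \<tau>) (concat (map (\<lambda>x. [x, 1]) xs))))"

end

(* The boxed convolution of f = I.F and g = I.G is a sum over planar binary trees. Splitting every
   tree at its root expresses the two alternating tree sums X (arguments padded as 1, x1, 1, x2, ...)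
   and Y (padded as x1, 1, x2, 1, ...) through each other:
     X = F o (Y.I),   Y = G o (I.X),   and   boxconv f g = g o (I.X) = I.(X.Y).
   So boxconv f g lies in G^I, and its compositional inverse is (I.X)^{o-1} o g^{o-1}. The two
   equations give (I.X)^{o-1} = I.(S_f o (G.I)); composing with g^{o-1} = I.S_g and using
   G o (I.S_g) = S_g^{-1} yields I.S_g.(S_f o (S_g^{-1}.I.S_g)). *)

theory Submission
  imports Defs
begin


section \<open>Ordered block decompositions\<close>

declare blocks.simps(2)[simp del]

lemma blocks_iff: "bs \<in> set (blocks xs) \<longleftrightarrow> concat bs = xs \<and> [] \<notin> set bs"
proof (induction xs arbitrary: bs rule: blocks.induct)
  case 1
  then show ?case by (cases bs) auto
next
  case (2 x xs)
  show ?case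
  proof
    assume "bs \<in> set (blocks (x # xs))"
    then have "\<exists>k\<in>set [1..<length xs+2]. bs \<in> set (map (\<lambda>bs. take k (x#xs) # bs) (blocks (drop k (x#xs))))"
      by (simp only: blocks.simps set_concat set_map) fastforce
    then obtain k where k0: "k \<in> set [1..<length xs + 2]" and
       "bs \<in> set (map (\<lambda>bs. take k (x#xs) # bs) (blocks (drop k (x#xs))))" by blast
    then obtain bs' where bs': "bs' \<in> set (blocks (drop k (x#xs)))"
      and bs: "bs = take k (x#xs) # bs'" unfolding set_map by blast
    have k: "k \<in> {1..<length xs + 2}" using k0 by (simp only: set_upt)
    from 2[OF k0] bs' have "concat bs' = drop k (x#xs) \<and> [] \<notin> set bs'" by blast
    with bs k show "concat bs = x # xs \<and> [] \<notin> set bs" by auto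
  next
    assume a: "concat bs = x # xs \<and> [] \<notin> set bs"
    then obtain b bs' where bs: "bs = b # bs'" by (cases bs) auto
    define k where "k = length b"
    from a bs have b: "b \<noteq> []" "b @ concat bs' = x # xs" "[] \<notin> set bs'" by auto
    have tk: "take k (x#xs) = b" "drop k (x#xs) = concat bs'" unfolding k_def b(2)[symmetric] by simp_all
    have "length b \<le> length (x#xs)" unfolding b(2)[symmetric] by simp
    moreover have "length b \<ge> 1" using b(1) by (cases b) simp_all
    ultimately have kr: "k \<in> {1..<length xs + 2}" unfolding k_def by simp
    have kr0: "k \<in> set [1..<length xs + 2]" using kr by (simp only: set_upt)
    have "bs' \<in> set (blocks (drop k (x#xs)))" by (subst 2[OF kr0]) (simp add: tk b(3))
    then have X: "bs \<in> set (map (\<lambda>bs. take k (x#xs) # bs) (blocks (drop k (x#xs))))"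
      unfolding bs tk(1) set_map by (rule imageI)
    have Y: "map (\<lambda>bs. take k (x#xs) # bs) (blocks (drop k (x#xs))) \<in>
        set (map (\<lambda>k. map (\<lambda>bs. take k (x#xs) # bs) (blocks (drop k (x#xs)))) [1..<length xs + 2])"
      using kr0 unfolding set_map by (rule imageI)
    show "bs \<in> set (blocks (x # xs))"
      unfolding blocks.simps(2)[of x xs] set_concat by (rule UnionI[OF imageI[OF Y, of set] X])
  qed
qed

lemma distinct_concat_map_keyed:
  assumes "distinct ks" and "\<And>k. k \<in> set ks \<Longrightarrow> distinct (\<phi> k)"
    and "\<And>k y. k \<in> set ks \<Longrightarrow> y \<in> set (\<phi> k) \<Longrightarrow> key y = k"
  shows "distinct (concat (map \<phi> ks))"
  using assms
proof (induction ks)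
  case (Cons k ks)
  have "y \<notin> set (concat (map \<phi> ks))" if y: "y \<in> set (\<phi> k)" for y
  proof
    assume "y \<in> set (concat (map \<phi> ks))"
    then obtain k' where "k' \<in> set ks" "y \<in> set (\<phi> k')" by auto
    then have "key y = k'" "key y = k" using y Cons.prems(3) by auto
    then show False using \<open>k' \<in> set ks\<close> Cons.prems(1) by auto
  qed
  then show ?case using Cons by auto
qed simp

lemma distinct_blocks: "distinct (blocks xs)"
proof (induction xs rule: blocks.induct)
  case (2 x xs)
  show ?case
    unfolding blocks.simps(2)
  proof (rule distinct_concat_map_keyed[where key="\<lambda>bs. length (hd bs)"])
    fix k assume "k \<in> set [1..<length xs + 2]"
    then show "distinct (map (\<lambda>bs. take k (x # xs) # bs) (blocks (drop k (x # xs))))"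
      using "2.IH" by (simp add: distinct_map inj_on_def)
  qed auto
qed simp

definition block_set :: "'a list \<Rightarrow> 'a list list set" where
  "block_set xs = {bs. concat bs = xs \<and> [] \<notin> set bs}"

lemma set_blocks: "set (blocks xs) = block_set xs"
  using blocks_iff unfolding block_set_def by blast

lemma finite_block_set: "finite (block_set xs)"
  by (metis List.finite_set set_blocks)

lemma sum_list_blocks: "sum_list (map h (blocks xs)) = (\<Sum>bs\<in>block_set xs. h bs)"
  by (metis distinct_blocks set_blocks sum_list_distinct_conv_sum_set)

lemma mcomp_block_set: "mcomp f g xs = (\<Sum>bs\<in>block_set xs. f (map g bs))"
  unfolding mcomp_def by (rule sum_list_blocks)


section \<open>Multilinearity, one slot at a time\<close>

definition additive_args :: "('b::ring_1 list \<Rightarrow> 'b) \<Rightarrow> bool" where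
  "additive_args H \<longleftrightarrow> (\<forall>ps ss x y. H (ps @ (x + y) # ss) = H (ps @ x # ss) + H (ps @ y # ss))"

definition linear_in_slot :: "('k \<Rightarrow> 'b \<Rightarrow> 'b) \<Rightarrow> ('b::ring_1 list \<Rightarrow> 'b) \<Rightarrow> 'b list \<Rightarrow> 'b list \<Rightarrow> bool" where
  "linear_in_slot sc H ps ss \<longleftrightarrow> (\<forall>x y. H (ps @ (x + y) # ss) = H (ps @ x # ss) + H (ps @ y # ss)) \<and>
      (\<forall>c x. H (ps @ sc c x # ss) = sc c (H (ps @ x # ss)))"

lemma multilinear_iff_linear_in_slot:
  "multilinear sc H n \<longleftrightarrow> (\<forall>ps ss. length ps + length ss + 1 = n \<longrightarrow> linear_in_slot sc H ps ss)"
proof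
  assume m: "multilinear sc H n"
  show "\<forall>ps ss. length ps + length ss + 1 = n \<longrightarrow> linear_in_slot sc H ps ss"
    unfolding linear_in_slot_def
  proof (intro allI impI conjI)
    fix ps ss :: "'b list" and x y :: 'b and c
    assume l: "length ps + length ss + 1 = n"
    let ?xs = "ps @ 0 # ss"
    have l2: "length ?xs = n" "length ps < n" using l by auto
    have u: "\<And>z. ?xs[length ps := z] = ps @ z # ss" by (simp add: list_update_append)
    from m[unfolded multilinear_def, rule_format, of ?xs "length ps" x y c] l2
    show "H (ps @ (x + y) # ss) = H (ps @ x # ss) + H (ps @ y # ss)"
      and "H (ps @ sc c x # ss) = sc c (H (ps @ x # ss))" unfolding u by blast+
  qed
next
  assume m: "\<forall>ps ss. length ps + length ss + 1 = n \<longrightarrow> linear_in_slot sc H ps ss"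
  show "multilinear sc H n" unfolding multilinear_def
  proof (intro allI impI conjI)
    fix xs :: "'b list" and i a b c
    assume l: "length xs = n \<and> i < n"
    have u: "\<And>z. xs[i := z] = take i xs @ z # drop (Suc i) xs"
      using l by (simp add: upd_conv_take_nth_drop)
    have len: "length (take i xs) + length (drop (Suc i) xs) + 1 = n" using l by auto
    from m len show "H (xs[i := a + b]) = H (xs[i := a]) + H (xs[i := b])"
      and "H (xs[i := sc c a]) = sc c (H (xs[i := a]))"
      unfolding linear_in_slot_def u by blast+
  qed
qed

lemma multilinear_0: "multilinear sc H 0"
  unfolding multilinear_iff_linear_in_slot by simp

lemma mem_Mult_iff: "H \<in> Mult sc \<longleftrightarrow> (\<forall>n. multilinear sc H n)"
  unfolding Mult_def by simp

lemma multilinear_linear_in_slot: "multilinear sc H (length ps + length ss + 1) \<Longrightarrow> linear_in_slot sc H ps ss"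
  unfolding multilinear_iff_linear_in_slot by blast

lemma additive_args_if_multilinear: "(\<forall>n. multilinear sc H n) \<Longrightarrow> additive_args H"
  unfolding additive_args_def multilinear_iff_linear_in_slot linear_in_slot_def by blast

lemma additive_args_if_Mult: "A \<in> Mult sc \<Longrightarrow> additive_args A"
  using additive_args_if_multilinear unfolding mem_Mult_iff by blast

lemma G_invD:
  assumes "F \<in> G_inv sc"
  shows G_inv_unit: "is_unit_ring (F [])" and G_inv_multilinear: "multilinear sc F n"
    and G_inv_additive_args: "additive_args F"
  using assms additive_args_if_Mult unfolding G_inv_def mem_Mult_iff by blast+

lemma multilinear_cong:
  "(\<And>xs. length xs = n \<Longrightarrow> H xs = H' xs) \<Longrightarrow> multilinear sc H n \<longleftrightarrow> multilinear sc H' n"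
  unfolding multilinear_iff_linear_in_slot linear_in_slot_def by auto

lemma additive_args_zero: "additive_args H \<Longrightarrow> H (ps @ 0 # ss) = 0"
proof -
  assume "additive_args H"
  then have "H (ps @ (0 + 0) # ss) = H (ps @ 0 # ss) + H (ps @ 0 # ss)" unfolding additive_args_def by blast
  then show ?thesis by simp
qed

lemma additive_args_sum: 
  assumes "additive_args H" "finite A"
  shows "H (ps @ (\<Sum>i\<in>A. v i) # ss) = (\<Sum>i\<in>A. H (ps @ v i # ss))"
  using assms(2)
proof (induction A rule: finite_induct)
  case empty
  then show ?case using additive_args_zero[OF assms(1)] by simp
next
  case (insert x F)
  then show ?case using assms(1) unfolding additive_args_def by simp
qed

lemma additive_args_Cons: "additive_args H \<Longrightarrow> additive_args (\<lambda>ws. H (w0 # ws))"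
  unfolding additive_args_def by (metis append_Cons)

lemma additive_args_sum_Cons:
  "additive_args H \<Longrightarrow> finite A \<Longrightarrow> (\<Sum>i\<in>A. H (v i # ss)) = H ((\<Sum>i\<in>A. v i) # ss)"
  using additive_args_sum[of H A "[]" v ss] by simp


section \<open>The product\<close>

definition splits :: "'a list \<Rightarrow> ('a list \<times> 'a list) set" where
  "splits xs = {(u, v). u @ v = xs}"

lemma splits_eq_image: "splits xs = (\<lambda>k. (take k xs, drop k xs)) ` {0..length xs}"
proof
  show "splits xs \<subseteq> (\<lambda>k. (take k xs, drop k xs)) ` {0..length xs}"
  proof
    fix p assume "p \<in> splits xs"
    then obtain u v where p: "p = (u, v)" "u @ v = xs" unfolding splits_def by blast
    then have "p = (take (length u) xs, drop (length u) xs)" by auto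
    moreover have "length u \<in> {0..length xs}" using p by auto
    ultimately show "p \<in> (\<lambda>k. (take k xs, drop k xs)) ` {0..length xs}" by blast
  qed
  show "(\<lambda>k. (take k xs, drop k xs)) ` {0..length xs} \<subseteq> splits xs"
    unfolding splits_def by auto
qed

lemma finite_splits: "finite (splits xs)"
  unfolding splits_eq_image by simp

lemma sum_take_drop_eq_sum_splits: "(\<Sum>k=0..length xs. h (take k xs) (drop k xs)) = (\<Sum>(u,v)\<in>splits xs. h u v)"
proof -
  have inj: "inj_on (\<lambda>k. (take k xs, drop k xs)) {0..length xs}"
    by (rule inj_onI) (metis (no_types, lifting) Pair_inject atLeastAtMost_iff length_take min.absorb2)
  show ?thesis unfolding splits_eq_image sum.reindex[OF inj] by simp
qed

lemma mprod_splits: "mprod a b xs = (\<Sum>(u,v)\<in>splits xs. a u * b v)"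
  unfolding mprod_def using sum_take_drop_eq_sum_splits[of "\<lambda>u v. a u * b v" xs] by simp

lemma mprod_map: "mprod a b (map c bs) = (\<Sum>(u,v)\<in>splits bs. a (map c u) * b (map c v))"
  unfolding mprod_def using sum_take_drop_eq_sum_splits[of "\<lambda>u v. a (map c u) * b (map c v)" bs]
  by (simp add: take_map drop_map)

lemma mprod_assoc: "mprod (mprod a b) c = mprod a (mprod b c)"
proof
  fix xs
  have "mprod (mprod a b) c xs = (\<Sum>(u,w)\<in>splits xs. (\<Sum>(u1,u2)\<in>splits u. a u1 * b u2) * c w)"
    unfolding mprod_splits ..
  also have "\<dots> = (\<Sum>(u,w)\<in>splits xs. (\<Sum>(u1,u2)\<in>splits u. a u1 * b u2 * c w))"
    by (simp add: sum_distrib_right case_prod_unfold)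
  also have "\<dots> = (\<Sum>x\<in>splits xs. \<Sum>y\<in>splits (fst x). a (fst y) * b (snd y) * c (snd x))"
    by (simp add: case_prod_unfold)
  also have "\<dots> = (\<Sum>p\<in>Sigma (splits xs) (\<lambda>x. splits (fst x)). a (fst (snd p)) * b (snd (snd p)) * c (snd (fst p)))"
    by (subst sum.Sigma) (simp_all add: finite_splits case_prod_unfold)
  also have "\<dots> = (\<Sum>p\<in>Sigma (splits xs) (\<lambda>x. splits (snd x)). a (fst (fst p)) * (b (fst (snd p)) * c (snd (snd p))))"
    by (rule sum.reindex_bij_witness[where i="\<lambda>((u1,v),(u2,w)). ((u1 @ u2, w), (u1, u2))"
          and j="\<lambda>((u,w),(u1,u2)). ((u1, u2 @ w), (u2, w))"]) (auto simp: splits_def mult.assoc)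
  also have "\<dots> = (\<Sum>x\<in>splits xs. \<Sum>y\<in>splits (snd x). a (fst x) * (b (fst y) * c (snd y)))"
    by (subst sum.Sigma) (simp_all add: finite_splits case_prod_unfold)
  also have "\<dots> = (\<Sum>(u1,v)\<in>splits xs. (\<Sum>(u2,w)\<in>splits v. a u1 * (b u2 * c w)))"
    by (simp add: case_prod_unfold)
  also have "\<dots> = (\<Sum>(u1,v)\<in>splits xs. a u1 * (\<Sum>(u2,w)\<in>splits v. b u2 * c w))"
    by (simp add: sum_distrib_left case_prod_unfold)
  also have "\<dots> = mprod a (mprod b c) xs"
    unfolding mprod_splits ..
  finally show "mprod (mprod a b) c xs = mprod a (mprod b c) xs" .
qed

lemma mprod_mone_left[simp]: "mprod mone a = a"
proof
  fix xs :: "'a list"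
  have "mprod mone a xs = (\<Sum>k\<in>{0..length xs}. if k = 0 then a xs else 0)"
    unfolding mprod_def mone_def by (rule sum.cong) auto
  then show "mprod mone a xs = a xs" by simp
qed

lemma mprod_mone_right[simp]: "mprod a mone = a"
proof
  fix xs :: "'a list"
  have "mprod a mone xs = (\<Sum>k\<in>{0..length xs}. if k = length xs then a xs else 0)"
    unfolding mprod_def mone_def by (rule sum.cong) auto
  then show "mprod a mone xs = a xs" by simp
qed

lemma mprod_Nil[simp]: "mprod a b [] = a [] * b []"
  unfolding mprod_def by simp

lemma mI_mprod_Cons[simp]: "mprod mI F (x # xs) = x * F xs"
proof -
  have "mprod mI F (x # xs) = (\<Sum>k\<in>{0..Suc (length xs)}. if k = 1 then x * F xs else 0)"
    unfolding mprod_def mI_def by (rule sum.cong) auto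
  then show ?thesis by (simp only: sum.delta[OF finite_atLeastAtMost]) simp
qed

lemma mI_Nil[simp]: "mI [] = 0" unfolding mI_def by simp

lemma mprod_mI_snoc: "mprod F mI (xs @ [x]) = F xs * x"
proof -
  have "mprod F mI (xs @ [x]) = (\<Sum>k\<in>{0..Suc (length xs)}. if k = length xs then F xs * x else 0)"
    unfolding mprod_def mI_def by (rule sum.cong) (auto simp: Suc_diff_le)
  then show ?thesis by simp
qed

lemma mIprod_cancel:
  assumes "mprod mI A = mprod mI B" shows "A = B"
proof
  fix xs
  have "mprod mI A (1 # xs) = mprod mI B (1 # xs)" using assms by simp
  then show "A xs = B xs" by simp
qed

lemma additive_args_mIprod: "additive_args G \<Longrightarrow> additive_args (mprod mI G)"
  unfolding additive_args_def
proof (intro allI)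
  fix ps ss :: "'a list" and x y :: 'a
  assume G: "\<forall>ps ss x y. G (ps @ (x + y) # ss) = G (ps @ x # ss) + G (ps @ y # ss)"
  show "mprod mI G (ps @ (x + y) # ss) = mprod mI G (ps @ x # ss) + mprod mI G (ps @ y # ss)"
  proof (cases ps)
    case Nil
    then show ?thesis by (simp add: distrib_right)
  next
    case (Cons p ps')
    then show ?thesis using G by (simp add: distrib_left)
  qed
qed


section \<open>Composition\<close>

lemma blocks_map: "blocks (map c xs) = map (map (map c)) (blocks xs)"
proof (induction xs rule: blocks.induct)
  case 1
  then show ?case by simp
next
  case (2 x xs)
  have "blocks (map c (x # xs)) = concat (map (\<lambda>k. map (\<lambda>bs. take k (map c (x # xs)) # bs) (blocks (drop k (map c (x # xs))))) [1..<length xs + 2])"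
    by (simp only: list.map blocks.simps length_map)
  also have "\<dots> = concat (map (\<lambda>k. map (\<lambda>bs. take k (map c (x # xs)) # bs) (map (map (map c)) (blocks (drop k (x # xs))))) [1..<length xs + 2])"
  proof -
    have IH: "\<And>k. k \<in> set [1..<length xs + 2] \<Longrightarrow> blocks (drop k (map c (x # xs))) = map (map (map c)) (blocks (drop k (x # xs)))"
      using 2 by (simp only: drop_map)
    show ?thesis by (rule arg_cong[where f=concat], rule map_cong[OF refl]) (simp only: IH)
  qed
  also have "\<dots> = map (map (map c)) (blocks (x # xs))"
    by (simp only: blocks.simps(2)[of x xs] map_concat map_map o_def list.map(2)[of c x xs, symmetric] take_map) (simp only: list.map(2))
  finally show ?case .
qed

lemma mcomp_map: "mcomp a b (map c ys) = (\<Sum>ds\<in>block_set ys. a (map (\<lambda>d. b (map c d)) ds))"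
proof -
  have "mcomp a b (map c ys) = sum_list (map (\<lambda>bs. a (map b bs)) (map (map (map c)) (blocks ys)))"
    unfolding mcomp_def blocks_map ..
  also have "\<dots> = sum_list (map (\<lambda>ds. a (map (\<lambda>d. b (map c d)) ds)) (blocks ys))"
    by (simp add: o_def)
  finally show ?thesis by (simp only: sum_list_blocks)
qed

lemma block_set_Nil: "block_set [] = {[]}"
proof -
  have "bs = []" if "concat bs = []" "[] \<notin> set bs" for bs :: "'a list list"
  proof (rule ccontr)
    assume "bs \<noteq> []"
    then have "hd bs \<in> set bs" by simp
    moreover have "hd bs = []" using that(1) \<open>bs \<noteq> []\<close> concat_eq_Nil_conv by auto
    ultimately show False using that(2) by simp
  qed
  then show ?thesis unfolding block_set_def by auto
qed

lemma mcomp_Nil[simp]: "mcomp a c [] = a []"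
  unfolding mcomp_block_set block_set_Nil by simp

lemma singleton_in_block_set: "xs \<noteq> [] \<Longrightarrow> [xs] \<in> block_set xs"
  unfolding block_set_def by simp

lemma block_set_length_1_iff: "bs \<in> block_set xs \<Longrightarrow> length bs = 1 \<longleftrightarrow> bs = [xs]"
  unfolding block_set_def by (cases bs) auto

lemma mcomp_mI_left:
  assumes "c [] = 0" shows "mcomp mI c = c"
proof
  fix xs :: "'a list"
  show "mcomp mI c xs = c xs"
  proof (cases "xs = []")
    case True
    then show ?thesis using assms by simp
  next
    case False
    have "mcomp mI c xs = (\<Sum>bs\<in>block_set xs. if bs = [xs] then c xs else 0)"
      unfolding mcomp_block_set
    proof (rule sum.cong)
      fix bs assume "bs \<in> block_set xs"
      then show "mI (map c bs) = (if bs = [xs] then c xs else 0)"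
        using block_set_length_1_iff[of bs xs] unfolding mI_def by auto
    qed simp
    also have "\<dots> = c xs"
      using singleton_in_block_set[OF False] finite_block_set[of xs] by (simp add: sum.delta)
    finally show ?thesis .
  qed
qed

lemma mcomp_mone[simp]: "mcomp mone c = mone"
proof
  fix xs :: "'a list"
  have "mcomp mone c xs = (\<Sum>bs\<in>block_set xs. if bs = [] then 1 else 0)"
    unfolding mcomp_block_set mone_def by (rule sum.cong) auto
  also have "\<dots> = mone xs"
    using finite_block_set[of xs] unfolding mone_def by (simp add: sum.delta block_set_def)
  finally show "mcomp mone c xs = mone xs" .
qed

lemma concat_singletons: "(\<forall>b\<in>set bs. length b = 1) \<Longrightarrow> bs = map (\<lambda>x. [x]) (concat bs)"
proof (induction bs)
  case Nil
  then show ?case by simp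
next
  case (Cons b bs)
  then obtain x where "b = [x]" by (metis One_nat_def length_0_conv length_Suc_conv list.set_intros(1))
  then show ?case using Cons by simp
qed

lemma mcomp_mI_right:
  assumes a: "additive_args a" shows "mcomp a mI = a"
proof
  fix xs :: "'a list"
  let ?s = "map (\<lambda>x. [x]) xs"
  have s: "?s \<in> block_set xs" unfolding block_set_def by (induction xs) auto
  have "mcomp a mI xs = (\<Sum>bs\<in>block_set xs. if bs = ?s then a xs else 0)"
    unfolding mcomp_block_set
  proof (rule sum.cong)
    fix bs assume bs: "bs \<in> block_set xs"
    show "a (map mI bs) = (if bs = ?s then a xs else 0)"
    proof (cases "bs = ?s")
      case True
      then show ?thesis by (simp add: o_def mI_def)
    next
      case False
      then have "\<not> (\<forall>b\<in>set bs. length b = 1)" using concat_singletons[of bs] bs unfolding block_set_def by auto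
      then obtain i where i: "i < length bs" "length (bs ! i) \<noteq> 1" by (metis in_set_conv_nth)
      have "map mI bs = take i (map mI bs) @ mI (bs ! i) # drop (Suc i) (map mI bs)"
        using id_take_nth_drop[of i "map mI bs"] i by simp
      also have "mI (bs ! i) = 0" using i unfolding mI_def by simp
      finally have "a (map mI bs) = 0" using additive_args_zero[OF a] by metis
      then show ?thesis using False by simp
    qed
  qed simp
  also have "\<dots> = a xs" using s finite_block_set[of xs] by (simp add: sum.delta)
  finally show "mcomp a mI xs = a xs" .
qed

lemma mcomp_mprod: "mcomp (mprod a b) c = mprod (mcomp a c) (mcomp b c)"
proof
  fix xs :: "'a list"
  have "mcomp (mprod a b) c xs = (\<Sum>bs\<in>block_set xs. \<Sum>q\<in>splits bs. a (map c (fst q)) * b (map c (snd q)))"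
    unfolding mcomp_block_set mprod_map by (simp add: case_prod_unfold)
  also have "\<dots> = (\<Sum>p\<in>Sigma (block_set xs) splits. a (map c (fst (snd p))) * b (map c (snd (snd p))))"
    by (subst sum.Sigma) (simp_all add: finite_splits finite_block_set case_prod_unfold)
  also have "\<dots> = (\<Sum>p\<in>Sigma (splits xs) (\<lambda>x. block_set (fst x) \<times> block_set (snd x)). a (map c (fst (snd p))) * b (map c (snd (snd p))))"
    by (rule sum.reindex_bij_witness[where i="\<lambda>(uv,(x,y)). (x @ y, (x, y))"
          and j="\<lambda>(bs,(x,y)). ((concat x, concat y), (x, y))"]) (auto simp: splits_def block_set_def)
  also have "\<dots> = (\<Sum>x\<in>splits xs. \<Sum>q\<in>block_set (fst x) \<times> block_set (snd x). a (map c (fst q)) * b (map c (snd q)))"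
    by (subst sum.Sigma) (simp_all add: finite_splits finite_block_set case_prod_unfold)
  also have "\<dots> = (\<Sum>x\<in>splits xs. mcomp a c (fst x) * mcomp b c (snd x))"
    unfolding mcomp_block_set sum_product sum.cartesian_product by (simp add: case_prod_unfold)
  also have "\<dots> = mprod (mcomp a c) (mcomp b c) xs"
    unfolding mprod_splits by (simp add: case_prod_unfold)
  finally show "mcomp (mprod a b) c xs = mprod (mcomp a c) (mcomp b c) xs" .
qed

lemma sum_list_concat: "sum_list (concat xss) = sum_list (map sum_list (xss :: 'a::monoid_add list list))"
  by (induction xss) simp_all

lemma mcomp_Cons:
  "mcomp H c (x # xs) = (\<Sum>k=0..length xs. mcomp (\<lambda>ws. H (c (x # take k xs) # ws)) c (drop k xs))"
proof -
  have "mcomp H c (x # xs) = sum_list (map (\<lambda>bs. H (map c bs))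
      (concat (map (\<lambda>k. map (\<lambda>bs. take k (x # xs) # bs) (blocks (drop k (x # xs)))) [1..<length xs + 2])))"
    unfolding mcomp_def by (simp only: blocks.simps(2))
  also have "\<dots> = sum_list (map (\<lambda>k. mcomp (\<lambda>ws. H (c (take k (x # xs)) # ws)) c (drop k (x # xs))) [1..<length xs + 2])"
    by (simp add: map_concat sum_list_concat o_def mcomp_def)
  also have "\<dots> = (\<Sum>k\<in>{Suc 0..Suc (length xs)}. mcomp (\<lambda>ws. H (c (take k (x # xs)) # ws)) c (drop k (x # xs)))"
    by (simp only: sum_list_distinct_conv_sum_set[OF distinct_upt] set_upt) (simp add: atLeastLessThanSuc_atLeastAtMost)
  also have "\<dots> = (\<Sum>k=0..length xs. mcomp (\<lambda>ws. H (c (x # take k xs) # ws)) c (drop k xs))"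
    by (simp only: sum.shift_bounds_cl_Suc_ivl) simp
  finally show ?thesis .
qed

definition choices :: "('x \<Rightarrow> 'y set) \<Rightarrow> 'x list \<Rightarrow> 'y list set" where
  "choices S bs = {ys. list_all2 (\<lambda>y b. y \<in> S b) ys bs}"

lemma choices_Nil: "choices S [] = {[]}"
  unfolding choices_def by auto

lemma choices_Cons: "choices S (b # bs) = (\<lambda>(y, ys). y # ys) ` (S b \<times> choices S bs)"
  unfolding choices_def by (auto simp: list_all2_Cons2)

lemma finite_choices: "(\<And>b. finite (S b)) \<Longrightarrow> finite (choices S bs)"
  by (induction bs) (simp_all add: choices_Nil choices_Cons)

lemma additive_args_map_sum:
  assumes a: "additive_args a" and fin: "\<And>b. finite (S b)"
  shows "a (ps @ map (\<lambda>b. \<Sum>y\<in>S b. phi y) bs) = (\<Sum>ys\<in>choices S bs. a (ps @ map phi ys))"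
proof (induction bs arbitrary: ps)
  case Nil
  then show ?case by (simp add: choices_Nil)
next
  case (Cons b bs)
  have "a (ps @ map (\<lambda>b. \<Sum>y\<in>S b. phi y) (b # bs)) = a (ps @ (\<Sum>y\<in>S b. phi y) # map (\<lambda>b. \<Sum>y\<in>S b. phi y) bs)"
    by simp
  also have "\<dots> = (\<Sum>y\<in>S b. a (ps @ phi y # map (\<lambda>b. \<Sum>y\<in>S b. phi y) bs))"
    by (rule additive_args_sum[OF a fin])
  also have "\<dots> = (\<Sum>y\<in>S b. a ((ps @ [phi y]) @ map (\<lambda>b. \<Sum>y\<in>S b. phi y) bs))"
    by simp
  also have "\<dots> = (\<Sum>y\<in>S b. \<Sum>ys\<in>choices S bs. a ((ps @ [phi y]) @ map phi ys))"
    by (rule sum.cong[OF refl]) (rule Cons.IH)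
  also have "\<dots> = (\<Sum>q\<in>S b \<times> choices S bs. a (ps @ map phi (fst q # snd q)))"
    unfolding sum.cartesian_product by (simp add: case_prod_unfold)
  also have "\<dots> = (\<Sum>ys\<in>choices S (b # bs). a (ps @ map phi ys))"
    unfolding choices_Cons by (subst sum.reindex) (auto simp: inj_on_def case_prod_unfold)
  finally show ?case .
qed

lemma choices_block_set_iff:
  "ys \<in> choices block_set bs \<longleftrightarrow> bs = map concat ys \<and> (\<forall>y\<in>set ys. [] \<notin> set y)"
  unfolding choices_def
proof (induction ys arbitrary: bs)
  case Nil
  then show ?case by auto
next
  case (Cons y ys)
  then show ?case by (cases bs) (auto simp: block_set_def)
qed

lemma concat_neq_Nil: "[] \<notin> set d \<Longrightarrow> d \<noteq> [] \<Longrightarrow> concat d \<noteq> []"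
  by (cases d) auto

lemma concat_map_concat: "concat (map concat xss) = concat (concat xss)"
  by (induction xss) simp_all

lemma sum_block_set_block_set:
  "(\<Sum>bs\<in>block_set xs. \<Sum>ds\<in>block_set bs. h ds) = (\<Sum>bs\<in>block_set xs. \<Sum>ys\<in>choices block_set bs. h ys)"
proof -
  have "(\<Sum>bs\<in>block_set xs. \<Sum>ds\<in>block_set bs. h ds) = (\<Sum>p\<in>Sigma (block_set xs) block_set. h (snd p))"
    by (subst sum.Sigma) (simp_all add: finite_block_set case_prod_unfold)
  also have "\<dots> = (\<Sum>p\<in>Sigma (block_set xs) (choices block_set). h (snd p))"
  proof (rule sum.reindex_bij_witness[where i="\<lambda>(bs, ys). (concat ys, ys)" and j="\<lambda>(bs, ds). (map concat ds, ds)"])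
    fix p assume p: "p \<in> Sigma (block_set xs) (choices block_set)"
    then obtain bs ys where p': "p = (bs, ys)" "bs \<in> block_set xs" "ys \<in> choices block_set bs" by blast
    then have bs: "bs = map concat ys" "\<forall>y\<in>set ys. [] \<notin> set y" using choices_block_set_iff by blast+
    have ne: "\<forall>y\<in>set ys. y \<noteq> []"
    proof
      fix y assume y: "y \<in> set ys"
      have "concat y \<in> set bs" using y bs(1) by simp
      then show "y \<noteq> []" using p'(2) unfolding block_set_def by auto
    qed
    show "(case (case p of (bs, ys) \<Rightarrow> (concat ys, ys)) of (bs, ds) \<Rightarrow> (map concat ds, ds)) = p"
      using p' bs by simp
    have ne': "[] \<notin> set ys" using ne by blast
    show "(case p of (bs, ys) \<Rightarrow> (concat ys, ys)) \<in> Sigma (block_set xs) block_set"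
      using p' bs ne' unfolding block_set_def by (auto simp: concat_map_concat[symmetric])
  next
    fix p assume p: "p \<in> Sigma (block_set xs) block_set"
    then obtain bs ds where p': "p = (bs, ds)" "bs \<in> block_set xs" "ds \<in> block_set bs" by blast
    then have d: "concat ds = bs" "[] \<notin> set ds" "concat bs = xs" "[] \<notin> set bs" unfolding block_set_def by auto
    have dne: "\<forall>d\<in>set ds. [] \<notin> set d" using d by auto
    have cne: "[] \<notin> set (map concat ds)" using dne d(2) concat_neq_Nil by fastforce
    show "(case (case p of (bs, ds) \<Rightarrow> (map concat ds, ds)) of (bs, ys) \<Rightarrow> (concat ys, ys)) = p"
      using p' d by simp
    show "(case p of (bs, ds) \<Rightarrow> (map concat ds, ds)) \<in> Sigma (block_set xs) (choices block_set)"
      using p' d dne cne choices_block_set_iff unfolding block_set_def by (auto simp: concat_map_concat[symmetric])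
    show "h (snd (case p of (bs, ds) \<Rightarrow> (map concat ds, ds))) = h (snd p)" using p' by simp
  qed
  also have "\<dots> = (\<Sum>bs\<in>block_set xs. \<Sum>ys\<in>choices block_set bs. h ys)"
    by (subst sum.Sigma) (simp_all add: finite_block_set finite_choices case_prod_unfold)
  finally show ?thesis .
qed

lemma mcomp_assoc:
  assumes a: "additive_args a"
  shows "mcomp (mcomp a b) c = mcomp a (mcomp b c)"
proof
  fix xs :: "'a list"
  let ?t = "\<lambda>ds. a (map (\<lambda>d. b (map c d)) ds)"
  have "mcomp (mcomp a b) c xs = (\<Sum>bs\<in>block_set xs. \<Sum>ds\<in>block_set bs. ?t ds)"
    unfolding mcomp_block_set[of "mcomp a b"] mcomp_map ..
  also have "\<dots> = (\<Sum>bs\<in>block_set xs. \<Sum>ys\<in>choices block_set bs. ?t ys)"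
    by (rule sum_block_set_block_set)
  also have "\<dots> = (\<Sum>bs\<in>block_set xs. a ([] @ map (\<lambda>bt. \<Sum>g\<in>block_set bt. b (map c g)) bs))"
    by (rule sum.cong[OF refl], subst additive_args_map_sum[OF a finite_block_set]) simp
  also have "\<dots> = mcomp a (mcomp b c) xs"
    unfolding mcomp_block_set[of a] mcomp_block_set[of b] by simp
  finally show "mcomp (mcomp a b) c xs = mcomp a (mcomp b c) xs" .
qed

lemma block_set_member:
  "bs \<in> block_set xs \<Longrightarrow> b \<in> set bs \<Longrightarrow> b \<noteq> [] \<and> length b \<le> length xs"
  unfolding block_set_def by (auto simp: length_concat elem_le_sum_list member_le_sum_list)

lemma mcomp_cong_short:
  assumes "\<And>ys. ys \<noteq> [] \<Longrightarrow> length ys \<le> length xs \<Longrightarrow> c ys = c' ys"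
  shows "mcomp a c xs = mcomp a c' xs"
  unfolding mcomp_block_set
proof (rule sum.cong[OF refl])
  fix bs assume bs: "bs \<in> block_set xs"
  have "map c bs = map c' bs" using block_set_member[OF bs] assms by (simp add: map_eq_conv)
  then show "a (map c bs) = a (map c' bs)" by (rule arg_cong)
qed


section \<open>Products and compositions of multilinear series\<close>

context
  fixes sc :: "'k::field_char_0 \<Rightarrow> 'b::ring_1 \<Rightarrow> 'b"
  assumes alg: "algebra_over sc"
begin

lemma module_scale: "module sc" using alg unfolding algebra_over_def by blast

lemma scale_mult_left: "sc c x * y = sc c (x * y)" using alg unfolding algebra_over_def by metis
lemma scale_mult_right: "x * sc c y = sc c (x * y)" using alg unfolding algebra_over_def by metis
lemma scale_add: "sc c (x + y) = sc c x + sc c y" using module.scale_right_distrib[OF module_scale] .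
lemma scale_neg: "sc c (- x) = - sc c x" using module.scale_minus_right[OF module_scale] .
lemma scale_zero: "sc c 0 = 0" using module.scale_zero_right[OF module_scale] .
lemma linear_in_slot_mult_left: "linear_in_slot sc H ps ss \<Longrightarrow> linear_in_slot sc (\<lambda>xs. u * H xs) ps ss"
  unfolding linear_in_slot_def by (simp add: distrib_left scale_mult_right)

lemma linear_in_slot_mult_right: "linear_in_slot sc H ps ss \<Longrightarrow> linear_in_slot sc (\<lambda>xs. H xs * u) ps ss"
  unfolding linear_in_slot_def by (simp add: distrib_right scale_mult_left)

lemma linear_in_slot_add:
  "linear_in_slot sc H ps ss \<Longrightarrow> linear_in_slot sc G ps ss \<Longrightarrow> linear_in_slot sc (\<lambda>xs. H xs + G xs) ps ss"
  unfolding linear_in_slot_def by (simp add: scale_add algebra_simps)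

lemma linear_in_slot_neg: "linear_in_slot sc H ps ss \<Longrightarrow> linear_in_slot sc (\<lambda>xs. - H xs) ps ss"
  unfolding linear_in_slot_def by (simp add: scale_neg algebra_simps)

lemma linear_in_slot_zero: "linear_in_slot sc (\<lambda>xs. 0) ps ss"
  unfolding linear_in_slot_def by (simp add: scale_zero)

lemma linear_in_slot_sum:
  "finite A \<Longrightarrow> (\<And>i. i \<in> A \<Longrightarrow> linear_in_slot sc (H i) ps ss) \<Longrightarrow> linear_in_slot sc (\<lambda>xs. \<Sum>i\<in>A. H i xs) ps ss"
proof (induction A rule: finite_induct)
  case empty
  then show ?case using linear_in_slot_zero by simp
next
  case (insert x F)
  then show ?case using linear_in_slot_add[of "H x" ps ss "\<lambda>xs. \<Sum>i\<in>F. H i xs"] by simp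
qed

lemma multilinear_mI: "multilinear sc mI n"
  unfolding multilinear_iff_linear_in_slot linear_in_slot_def mI_def by (auto simp: scale_zero)

lemma multilinear_mult_left: "multilinear sc H n \<Longrightarrow> multilinear sc (\<lambda>xs. u * H xs) n"
  unfolding multilinear_iff_linear_in_slot using linear_in_slot_mult_left by blast

lemma multilinear_neg: "multilinear sc H n \<Longrightarrow> multilinear sc (\<lambda>xs. - H xs) n"
  unfolding multilinear_iff_linear_in_slot using linear_in_slot_neg by blast

lemma mprod_split:
  "mprod a b (ps @ y # ss) =
    (\<Sum>k=0..length ps. a (take k ps) * b (drop k ps @ y # ss)) +
    (\<Sum>j=0..length ss. a (ps @ y # take j ss) * b (drop j ss))"
proof -
  have "mprod a b (ps @ y # ss) = (\<Sum>k=0..length ps + (length ss + 1). a (take k (ps @ y # ss)) * b (drop k (ps @ y # ss)))"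
    unfolding mprod_def by (simp add: add.assoc)
  also have "\<dots> = (\<Sum>k=0..length ps. a (take k (ps @ y # ss)) * b (drop k (ps @ y # ss))) +
       (\<Sum>k=length ps + 1..length ps + (length ss + 1). a (take k (ps @ y # ss)) * b (drop k (ps @ y # ss)))"
    by (rule sum.ub_add_nat) simp
  also have "(\<Sum>k=0..length ps. a (take k (ps @ y # ss)) * b (drop k (ps @ y # ss))) =
      (\<Sum>k=0..length ps. a (take k ps) * b (drop k ps @ y # ss))"
    by (rule sum.cong) auto
  also have "(\<Sum>k=length ps + 1..length ps + (length ss + 1). a (take k (ps @ y # ss)) * b (drop k (ps @ y # ss))) =
      (\<Sum>j=0..length ss. a (take (j + (length ps + 1)) (ps @ y # ss)) * b (drop (j + (length ps + 1)) (ps @ y # ss)))"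
    using sum.shift_bounds_cl_nat_ivl[of "\<lambda>k. a (take k (ps @ y # ss)) * b (drop k (ps @ y # ss))" 0 "length ps + 1" "length ss"]
    by (simp add: add.commute)
  also have "\<dots> = (\<Sum>j=0..length ss. a (ps @ y # take j ss) * b (drop j ss))"
    by (rule sum.cong) auto
  finally show ?thesis .
qed

lemma linear_in_slot_mprod:
  assumes "\<And>k. k \<le> length ps \<Longrightarrow> a (take k ps) = 0 \<or> linear_in_slot sc b (drop k ps) ss"
    and "\<And>j. j \<le> length ss \<Longrightarrow> b (drop j ss) = 0 \<or> linear_in_slot sc a ps (take j ss)"
  shows "linear_in_slot sc (mprod a b) ps ss"
proof -
  have e: "mprod a b = (\<lambda>xs. mprod a b xs)" by simp
  have l1: "linear_in_slot sc (\<lambda>xs. \<Sum>k=0..length ps. a (take k ps) * b (drop k ps @ drop (length ps) xs)) ps ss"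
  proof (rule linear_in_slot_sum)
    fix k assume k: "k \<in> {0..length ps}"
    show "linear_in_slot sc (\<lambda>xs. a (take k ps) * b (drop k ps @ drop (length ps) xs)) ps ss"
    proof (cases "a (take k ps) = 0")
      case True
      then show ?thesis using linear_in_slot_zero by simp
    next
      case False
      then have "linear_in_slot sc b (drop k ps) ss" using assms(1) k by auto
      then have "linear_in_slot sc (\<lambda>xs. b (drop k ps @ drop (length ps) xs)) ps ss" unfolding linear_in_slot_def by simp
      then show ?thesis by (rule linear_in_slot_mult_left)
    qed
  qed simp
  have l2: "linear_in_slot sc (\<lambda>xs. \<Sum>j=0..length ss. a (take (length ps + 1 + j) xs) * b (drop j ss)) ps ss"
  proof (rule linear_in_slot_sum)
    fix j assume j: "j \<in> {0..length ss}"
    show "linear_in_slot sc (\<lambda>xs. a (take (length ps + 1 + j) xs) * b (drop j ss)) ps ss"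
    proof (cases "b (drop j ss) = 0")
      case True
      then show ?thesis using linear_in_slot_zero by simp
    next
      case False
      have "linear_in_slot sc a ps (take j ss)" using assms(2) j False by auto
      then have "linear_in_slot sc (\<lambda>xs. a (take (length ps + 1 + j) xs)) ps ss" unfolding linear_in_slot_def by simp
      then show ?thesis by (rule linear_in_slot_mult_right)
    qed
  qed simp
  have "linear_in_slot sc (\<lambda>xs. (\<Sum>k=0..length ps. a (take k ps) * b (drop k ps @ drop (length ps) xs)) +
           (\<Sum>j=0..length ss. a (take (length ps + 1 + j) xs) * b (drop j ss))) ps ss"
    by (rule linear_in_slot_add[OF l1 l2])
  then show ?thesis unfolding linear_in_slot_def mprod_split by simp
qed

lemma multilinear_mprod:
  assumes "\<And>m. m \<le> n \<Longrightarrow> multilinear sc a m" "\<And>m. m \<le> n \<Longrightarrow> multilinear sc b m"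
  shows "multilinear sc (mprod a b) n"
  unfolding multilinear_iff_linear_in_slot
proof (intro allI impI)
  fix ps ss :: "'b list" assume l: "length ps + length ss + 1 = n"
  show "linear_in_slot sc (mprod a b) ps ss"
  proof (rule linear_in_slot_mprod)
    fix k assume k: "k \<le> length ps"
    have "multilinear sc b (length (drop k ps) + length ss + 1)" using assms(2) l k by simp
    then show "a (take k ps) = 0 \<or> linear_in_slot sc b (drop k ps) ss" using multilinear_linear_in_slot by blast
  next
    fix j assume j: "j \<le> length ss"
    have "multilinear sc a (length ps + length (take j ss) + 1)" using assms(1) l j by simp
    then show "b (drop j ss) = 0 \<or> linear_in_slot sc a ps (take j ss)" using multilinear_linear_in_slot by blast
  qed
qed

lemma multilinear_mprod_const0_left:
  assumes "a [] = 0" "\<And>m. m \<le> n \<Longrightarrow> multilinear sc a m" "\<And>m. m < n \<Longrightarrow> multilinear sc b m"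
  shows "multilinear sc (mprod a b) n"
  unfolding multilinear_iff_linear_in_slot
proof (intro allI impI)
  fix ps ss :: "'b list" assume l: "length ps + length ss + 1 = n"
  show "linear_in_slot sc (mprod a b) ps ss"
  proof (rule linear_in_slot_mprod)
    fix k assume k: "k \<le> length ps"
    show "a (take k ps) = 0 \<or> linear_in_slot sc b (drop k ps) ss"
    proof (cases "k = 0")
      case True
      then show ?thesis using assms(1) by simp
    next
      case False
      have "multilinear sc b (length (drop k ps) + length ss + 1)" using assms(3) l k False by simp
      then show ?thesis using multilinear_linear_in_slot by blast
    qed
  next
    fix j assume j: "j \<le> length ss"
    have "multilinear sc a (length ps + length (take j ss) + 1)" using assms(2) l j by simp
    then show "b (drop j ss) = 0 \<or> linear_in_slot sc a ps (take j ss)" using multilinear_linear_in_slot by blast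
  qed
qed

lemma multilinear_mprod_const0_right:
  assumes "b [] = 0" "\<And>m. m < n \<Longrightarrow> multilinear sc a m" "\<And>m. m \<le> n \<Longrightarrow> multilinear sc b m"
  shows "multilinear sc (mprod a b) n"
  unfolding multilinear_iff_linear_in_slot
proof (intro allI impI)
  fix ps ss :: "'b list" assume l: "length ps + length ss + 1 = n"
  show "linear_in_slot sc (mprod a b) ps ss"
  proof (rule linear_in_slot_mprod)
    fix k assume k: "k \<le> length ps"
    have "multilinear sc b (length (drop k ps) + length ss + 1)" using assms(3) l k by simp
    then show "a (take k ps) = 0 \<or> linear_in_slot sc b (drop k ps) ss" using multilinear_linear_in_slot by blast
  next
    fix j assume j: "j \<le> length ss"
    show "b (drop j ss) = 0 \<or> linear_in_slot sc a ps (take j ss)"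
    proof (cases "j = length ss")
      case True
      then show ?thesis using assms(1) by simp
    next
      case False
      have "multilinear sc a (length ps + length (take j ss) + 1)" using assms(2) l j False by simp
      then show ?thesis using multilinear_linear_in_slot by blast
    qed
  qed
qed

end

text \<open>The blocks of xs depend on the entries of xs only through its length: indexing them by
  compositions of \<open>length xs\<close> makes the range of summation in \<open>mcomp\<close> independent of the entry
  in a given slot, so linearity in that slot can be checked term by term.\<close>

fun cut_list :: "nat list \<Rightarrow> 'a list \<Rightarrow> 'a list list" where
  "cut_list [] xs = []"
| "cut_list (l # ls) xs = take l xs # cut_list ls (drop l xs)"

definition compositions :: "nat \<Rightarrow> nat list set" where
  "compositions n = {ls. sum_list ls = n \<and> 0 \<notin> set ls}"

lemma cut_list_map_length: "concat bs = xs \<Longrightarrow> cut_list (map length bs) xs = bs"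
  by (induction bs arbitrary: xs) auto

lemma map_length_cut_list: "sum_list ls \<le> length xs \<Longrightarrow> map length (cut_list ls xs) = ls"
  by (induction ls arbitrary: xs) auto

lemma cut_list_in_block_set: "ls \<in> compositions (length xs) \<Longrightarrow> cut_list ls xs \<in> block_set xs"
proof (induction ls arbitrary: xs)
  case Nil
  then show ?case unfolding compositions_def block_set_def by simp
next
  case (Cons l ls)
  then have l: "0 < l" "l + sum_list ls = length xs" "0 \<notin> set ls" unfolding compositions_def by auto
  then have "ls \<in> compositions (length (drop l xs))" unfolding compositions_def by simp
  then have "cut_list ls (drop l xs) \<in> block_set (drop l xs)" by (rule Cons.IH)
  moreover have "take l xs \<noteq> []" using l by auto
  ultimately show ?case unfolding block_set_def by simp
qed

lemma map_length_in_compositions: "bs \<in> block_set xs \<Longrightarrow> map length bs \<in> compositions (length xs)"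
  unfolding block_set_def compositions_def by (auto simp: length_concat)

lemma block_set_eq_image_compositions: "block_set xs = (\<lambda>ls. cut_list ls xs) ` compositions (length xs)"
proof
  show "block_set xs \<subseteq> (\<lambda>ls. cut_list ls xs) ` compositions (length xs)"
  proof
    fix bs assume bs: "bs \<in> block_set xs"
    then have "bs = cut_list (map length bs) xs" using cut_list_map_length[of bs xs] unfolding block_set_def by simp
    then show "bs \<in> (\<lambda>ls. cut_list ls xs) ` compositions (length xs)" using map_length_in_compositions[OF bs] by blast
  qed
  show "(\<lambda>ls. cut_list ls xs) ` compositions (length xs) \<subseteq> block_set xs" using cut_list_in_block_set by blast
qed

lemma inj_on_cut_list: "inj_on (\<lambda>ls. cut_list ls xs) (compositions (length xs))"
proof (rule inj_onI)
  fix ls ls' assume h: "ls \<in> compositions (length xs)" "ls' \<in> compositions (length xs)" "cut_list ls xs = cut_list ls' xs"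
  have s1: "sum_list ls \<le> length xs" using h(1) unfolding compositions_def by simp
  have s2: "sum_list ls' \<le> length xs" using h(2) unfolding compositions_def by simp
  have "ls = map length (cut_list ls xs)" using map_length_cut_list[OF s1] by (rule sym)
  also have "\<dots> = map length (cut_list ls' xs)" using h(3) by (rule arg_cong)
  also have "\<dots> = ls'" using map_length_cut_list[OF s2] .
  finally show "ls = ls'" .
qed

lemma finite_compositions: "finite (compositions n)"
proof -
  have "compositions n \<subseteq> map length ` block_set (replicate n (0::nat))"
  proof
    fix ls assume ls: "ls \<in> compositions n"
    then have "cut_list ls (replicate n (0::nat)) \<in> block_set (replicate n 0)" using cut_list_in_block_set[of ls "replicate n (0::nat)"] by simp
    moreover have "map length (cut_list ls (replicate n (0::nat))) = ls" using map_length_cut_list[of ls "replicate n (0::nat)"] ls unfolding compositions_def by simp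
    ultimately show "ls \<in> map length ` block_set (replicate n (0::nat))" by (metis image_eqI)
  qed
  then show ?thesis using finite_block_set finite_subset by blast
qed

lemma mcomp_compositions: "mcomp a c xs = (\<Sum>ls\<in>compositions (length xs). a (map c (cut_list ls xs)))"
  unfolding mcomp_block_set block_set_eq_image_compositions by (subst sum.reindex[OF inj_on_cut_list]) simp

lemma cut_list_slot:
  "ls \<in> compositions (length ps + length ss + 1) \<Longrightarrow>
    \<exists>qs ps' ss' rs. (\<forall>y. cut_list ls (ps @ y # ss) = qs @ (ps' @ y # ss') # rs) \<and>
       length ps' + length ss' + 1 \<le> length ps + length ss + 1"
proof (induction ls arbitrary: ps)
  case Nil
  then show ?case unfolding compositions_def by simp
next
  case (Cons l ls)
  then have l: "0 < l" "l + sum_list ls = length ps + length ss + 1" "0 \<notin> set ls" unfolding compositions_def by auto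
  show ?case
  proof (cases "length ps < l")
    case True
    let ?j = "l - length ps - 1"
    have t: "\<And>y. take l (ps @ y # ss) = ps @ y # take ?j ss" using True
      by (simp add: take_Cons')
    have d: "\<And>y. drop l (ps @ y # ss) = drop ?j ss" using True
      by (simp add: drop_Cons')
    have "\<forall>y. cut_list (l # ls) (ps @ y # ss) = [] @ (ps @ y # take ?j ss) # cut_list ls (drop ?j ss)"
      using t d by simp
    moreover have "length ps + length (take ?j ss) + 1 \<le> length ps + length ss + 1" by simp
    ultimately show ?thesis by blast
  next
    case False
    have t: "\<And>y. take l (ps @ y # ss) = take l ps" using False by simp
    have d: "\<And>y. drop l (ps @ y # ss) = drop l ps @ y # ss" using False by simp
    have "ls \<in> compositions (length (drop l ps) + length ss + 1)" using l False unfolding compositions_def by simp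
    from Cons.IH[OF this] obtain qs ps' ss' rs where
      h: "\<forall>y. cut_list ls (drop l ps @ y # ss) = qs @ (ps' @ y # ss') # rs"
        "length ps' + length ss' + 1 \<le> length (drop l ps) + length ss + 1" by blast
    have "\<forall>y. cut_list (l # ls) (ps @ y # ss) = (take l ps # qs) @ (ps' @ y # ss') # rs"
      using t d h(1) by simp
    moreover have "length ps' + length ss' + 1 \<le> length ps + length ss + 1" using h(2) by simp
    ultimately show ?thesis by blast
  qed
qed

lemma linear_in_slot_cong:
  "(\<And>z. H (ps @ z # ss) = G (ps @ z # ss)) \<Longrightarrow> linear_in_slot sc H ps ss \<longleftrightarrow> linear_in_slot sc G ps ss"
  unfolding linear_in_slot_def by simp

context
  fixes sc :: "'k::field_char_0 \<Rightarrow> 'b::ring_1 \<Rightarrow> 'b"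
  assumes alg: "algebra_over sc"
begin

lemma multilinear_mcomp:
  assumes a: "\<And>m. multilinear sc a m" and c: "\<And>m. 0 < m \<Longrightarrow> m \<le> n \<Longrightarrow> multilinear sc c m"
  shows "multilinear sc (mcomp a c) n"
  unfolding multilinear_iff_linear_in_slot
proof (intro allI impI)
  fix ps ss :: "'b list" assume l: "length ps + length ss + 1 = n"
  have "linear_in_slot sc (\<lambda>xs. \<Sum>ls\<in>compositions n. a (map c (cut_list ls xs))) ps ss"
  proof (rule linear_in_slot_sum[OF alg finite_compositions])
    fix ls assume ls: "ls \<in> compositions n"
    then obtain qs ps' ss' rs where
      h: "\<forall>y. cut_list ls (ps @ y # ss) = qs @ (ps' @ y # ss') # rs"
        "length ps' + length ss' + 1 \<le> length ps + length ss + 1"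
      using cut_list_slot[of ls ps ss] l by blast
    have lc: "linear_in_slot sc c ps' ss'" using c[of "length ps' + length ss' + 1"] h(2) l multilinear_linear_in_slot by simp
    have la: "linear_in_slot sc a (map c qs) (map c rs)" using a multilinear_linear_in_slot by blast
    have "linear_in_slot sc (\<lambda>xs. a (map c qs @ c (ps' @ (xs ! length ps) # ss') # map c rs)) ps ss"
      using la lc unfolding linear_in_slot_def by simp
    then show "linear_in_slot sc (\<lambda>xs. a (map c (cut_list ls xs))) ps ss"
      by (subst linear_in_slot_cong[where G="\<lambda>xs. a (map c qs @ c (ps' @ (xs ! length ps) # ss') # map c rs)"])
        (simp_all add: h(1))
  qed
  then show "linear_in_slot sc (mcomp a c) ps ss"
    by (subst linear_in_slot_cong[where G="\<lambda>xs. \<Sum>ls\<in>compositions n. a (map c (cut_list ls xs))"])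
      (simp_all add: mcomp_compositions l[symmetric])
qed

end


section \<open>Multiplicative inverses\<close>

definition local_op :: "(('a list \<Rightarrow> 'b) \<Rightarrow> 'a list \<Rightarrow> 'b) \<Rightarrow> bool" where
  "local_op Phi \<longleftrightarrow> (\<forall>s t xs. (\<forall>ys. length ys < length xs \<longrightarrow> s ys = t ys) \<longrightarrow> Phi s xs = Phi t xs)"

lemma local_op_iterate_Suc:
  assumes "local_op Phi"
  shows "length xs < k \<Longrightarrow> (Phi ^^ Suc k) s xs = (Phi ^^ k) s xs"
proof (induction k arbitrary: xs)
  case (Suc k)
  then have "\<forall>ys. length ys < length xs \<longrightarrow> (Phi ^^ Suc k) s ys = (Phi ^^ k) s ys"
    by simp
  then have "Phi ((Phi ^^ Suc k) s) xs = Phi ((Phi ^^ k) s) xs"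
    using assms unfolding local_op_def by blast
  then show ?case by simp
qed simp

lemma local_op_iterate_stable:
  assumes "local_op Phi" and "length xs < k" and "k \<le> j"
  shows "(Phi ^^ j) s xs = (Phi ^^ k) s xs"
  using assms(3)
proof (induction j rule: dec_induct)
  case (step j)
  then show ?case using local_op_iterate_Suc[OF assms(1), of xs j s] assms(2) by simp
qed simp

lemma local_op_fixpoint_exists:
  fixes Phi :: "('a list \<Rightarrow> 'b::zero) \<Rightarrow> 'a list \<Rightarrow> 'b"
  assumes loc: "local_op Phi" shows "\<exists>s. Phi s = s"
proof
  define s where "s xs = (Phi ^^ Suc (length xs)) (\<lambda>_. 0) xs" for xs
  show "Phi s = s"
  proof
    fix xs :: "'a list"
    have "\<forall>ys. length ys < length xs \<longrightarrow> s ys = (Phi ^^ length xs) (\<lambda>_. 0) ys"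
      unfolding s_def using local_op_iterate_stable[OF loc] by (metis Suc_leI lessI)
    then have "Phi s xs = Phi ((Phi ^^ length xs) (\<lambda>_. 0)) xs"
      using loc unfolding local_op_def by blast
    then show "Phi s xs = s xs" unfolding s_def by simp
  qed
qed

lemma local_op_some_fixpoint: assumes "local_op Phi" shows "Phi (SOME s. Phi s = (s :: 'a list \<Rightarrow> 'b::zero)) = (SOME s. Phi s = s)"
  using local_op_fixpoint_exists[OF assms] by (rule someI_ex)

definition ring_inverse :: "'b::ring_1 \<Rightarrow> 'b" where
  "ring_inverse u = (SOME w. u * w = 1 \<and> w * u = 1)"

lemma ring_inverse_cancel: "is_unit_ring u \<Longrightarrow> u * ring_inverse u = 1 \<and> ring_inverse u * u = 1"
  unfolding is_unit_ring_def ring_inverse_def by (rule someI_ex)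

lemma is_unit_ring_ring_inverse: "is_unit_ring u \<Longrightarrow> is_unit_ring (ring_inverse u)"
  using ring_inverse_cancel unfolding is_unit_ring_def by blast

lemma is_unit_ring_mult: "is_unit_ring u \<Longrightarrow> is_unit_ring v \<Longrightarrow> is_unit_ring (u * v)"
proof -
  assume "is_unit_ring u" "is_unit_ring v"
  then obtain u' v' where "u * u' = 1" "u' * u = 1" "v * v' = 1" "v' * v = 1" unfolding is_unit_ring_def by blast
  then have "(u * v) * (v' * u') = 1" "(v' * u') * (u * v) = 1"
    by (simp_all add: mult.assoc) (metis mult.assoc mult_1_left)+
  then show ?thesis unfolding is_unit_ring_def by blast
qed

definition without_const :: "('b::ring_1 list \<Rightarrow> 'b) \<Rightarrow> 'b list \<Rightarrow> 'b" where
  "without_const A xs = (if xs = [] then 0 else A xs)"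

definition rinv_step :: "('b::ring_1 list \<Rightarrow> 'b) \<Rightarrow> ('b list \<Rightarrow> 'b) \<Rightarrow> 'b list \<Rightarrow> 'b" where
  "rinv_step A s xs = (if xs = [] then ring_inverse (A []) else - (ring_inverse (A []) * mprod (without_const A) s xs))"

definition linv_step :: "('b::ring_1 list \<Rightarrow> 'b) \<Rightarrow> ('b list \<Rightarrow> 'b) \<Rightarrow> 'b list \<Rightarrow> 'b" where
  "linv_step A s xs = (if xs = [] then ring_inverse (A []) else - (mprod s (without_const A) xs * ring_inverse (A [])))"

definition rinv :: "('b::ring_1 list \<Rightarrow> 'b) \<Rightarrow> 'b list \<Rightarrow> 'b" where
  "rinv A = (SOME s. rinv_step A s = s)"

definition linv :: "('b::ring_1 list \<Rightarrow> 'b) \<Rightarrow> 'b list \<Rightarrow> 'b" where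
  "linv A = (SOME s. linv_step A s = s)"

lemma mprod_without_const_left: "mprod A s xs = A [] * s xs + mprod (without_const A) s xs"
proof -
  have "mprod A s xs = (\<Sum>k=0..length xs. (if k = 0 then A [] * s xs else 0) + without_const A (take k xs) * s (drop k xs))"
    unfolding mprod_def by (rule sum.cong) (auto simp: without_const_def)
  also have "\<dots> = A [] * s xs + mprod (without_const A) s xs"
    unfolding sum.distrib mprod_def by simp
  finally show ?thesis .
qed

lemma mprod_without_const_right: "mprod s A xs = s xs * A [] + mprod s (without_const A) xs"
proof -
  have "mprod s A xs = (\<Sum>k=0..length xs. (if k = length xs then s xs * A [] else 0) + s (take k xs) * without_const A (drop k xs))"
    unfolding mprod_def by (rule sum.cong) (auto simp: without_const_def)
  also have "\<dots> = s xs * A [] + mprod s (without_const A) xs"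
    unfolding sum.distrib mprod_def by simp
  finally show ?thesis .
qed

lemma local_rinv_step: "local_op (rinv_step A)"
  unfolding local_op_def
proof (intro allI impI)
  fix s t :: "'a list \<Rightarrow> 'a" and xs :: "'a list"
  assume h: "\<forall>ys. length ys < length xs \<longrightarrow> s ys = t ys"
  have "mprod (without_const A) s xs = mprod (without_const A) t xs"
    unfolding mprod_def
  proof (rule sum.cong[OF refl])
    fix k assume k: "k \<in> {0..length xs}"
    show "without_const A (take k xs) * s (drop k xs) = without_const A (take k xs) * t (drop k xs)"
    proof (cases "k = 0")
      case True
      then show ?thesis by (simp add: without_const_def)
    next
      case False
      then have "length (drop k xs) < length xs" using k by auto
      then show ?thesis using h by simp
    qed
  qed
  then show "rinv_step A s xs = rinv_step A t xs" unfolding rinv_step_def by simp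
qed

lemma local_linv_step: "local_op (linv_step A)"
  unfolding local_op_def
proof (intro allI impI)
  fix s t :: "'a list \<Rightarrow> 'a" and xs :: "'a list"
  assume h: "\<forall>ys. length ys < length xs \<longrightarrow> s ys = t ys"
  have "mprod s (without_const A) xs = mprod t (without_const A) xs"
    unfolding mprod_def
  proof (rule sum.cong[OF refl])
    fix k assume k: "k \<in> {0..length xs}"
    show "s (take k xs) * without_const A (drop k xs) = t (take k xs) * without_const A (drop k xs)"
    proof (cases "k = length xs")
      case True
      then show ?thesis by (simp add: without_const_def)
    next
      case False
      then have "length (take k xs) < length xs" using k by auto
      then show ?thesis using h by simp
    qed
  qed
  then show "linv_step A s xs = linv_step A t xs" unfolding linv_step_def by simp
qed

lemma rinv_step_rinv: "rinv_step A (rinv A) = rinv A"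
  unfolding rinv_def by (rule local_op_some_fixpoint[OF local_rinv_step])

lemma linv_step_linv: "linv_step A (linv A) = linv A"
  unfolding linv_def by (rule local_op_some_fixpoint[OF local_linv_step])

lemma rinv_unfold: "rinv A xs = rinv_step A (rinv A) xs"
  by (simp only: rinv_step_rinv)

lemma linv_unfold: "linv A xs = linv_step A (linv A) xs"
  by (simp only: linv_step_linv)

lemma rinv_right:
  assumes u: "is_unit_ring (A [])" shows "mprod A (rinv A) = mone"
proof
  fix xs :: "'a list"
  have e: "rinv A xs = rinv_step A (rinv A) xs" by (rule rinv_unfold)
  show "mprod A (rinv A) xs = mone xs"
  proof (cases "xs = []")
    case True
    then show ?thesis using ring_inverse_cancel[OF u] e unfolding rinv_step_def mone_def by simp
  next
    case False
    have "mprod A (rinv A) xs = A [] * rinv A xs + mprod (without_const A) (rinv A) xs" by (rule mprod_without_const_left)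
    also have "A [] * rinv A xs = - (A [] * ring_inverse (A []) * mprod (without_const A) (rinv A) xs)"
      using e False unfolding rinv_step_def by (simp add: mult.assoc)
    finally show ?thesis using ring_inverse_cancel[OF u] False unfolding mone_def by simp
  qed
qed

lemma linv_left:
  assumes u: "is_unit_ring (A [])" shows "mprod (linv A) A = mone"
proof
  fix xs :: "'a list"
  have e: "linv A xs = linv_step A (linv A) xs" by (rule linv_unfold)
  show "mprod (linv A) A xs = mone xs"
  proof (cases "xs = []")
    case True
    then show ?thesis using ring_inverse_cancel[OF u] e unfolding linv_step_def mone_def by simp
  next
    case False
    have "mprod (linv A) A xs = linv A xs * A [] + mprod (linv A) (without_const A) xs" by (rule mprod_without_const_right)
    also have "linv A xs * A [] = - (mprod (linv A) (without_const A) xs * (ring_inverse (A []) * A []))"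
      using e False unfolding linv_step_def by (simp add: mult.assoc)
    finally show ?thesis using ring_inverse_cancel[OF u] False unfolding mone_def by simp
  qed
qed

lemma linv_rinv: assumes u: "is_unit_ring (A [])" shows "linv A = rinv A"
proof -
  have "linv A = mprod (linv A) (mprod A (rinv A))" using rinv_right[of A, OF u] by simp
  also have "\<dots> = mprod (mprod (linv A) A) (rinv A)" by (simp add: mprod_assoc)
  also have "\<dots> = rinv A" using linv_left[of A, OF u] by simp
  finally show ?thesis .
qed

lemma rinv_left: assumes u: "is_unit_ring (A [])" shows "mprod (rinv A) A = mone"
  using linv_left[of A, OF u] linv_rinv[of A, OF u] by simp

lemma rinv_unique_right:
  assumes u: "is_unit_ring (A [])" and "mprod A B = mone" shows "B = rinv A"
proof -
  have "B = mprod (mprod (rinv A) A) B" using rinv_left[of A, OF u] by simp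
  also have "\<dots> = mprod (rinv A) (mprod A B)" by (simp add: mprod_assoc)
  also have "\<dots> = rinv A" using assms(2) by simp
  finally show ?thesis .
qed

lemma rinv_unique_left:
  assumes u: "is_unit_ring (A [])" and "mprod B A = mone" shows "B = rinv A"
proof -
  have "B = mprod B (mprod A (rinv A))" using rinv_right[of A, OF u] by simp
  also have "\<dots> = mprod (mprod B A) (rinv A)" by (simp add: mprod_assoc)
  also have "\<dots> = rinv A" using assms(2) by simp
  finally show ?thesis .
qed

lemma rinv_Nil: "rinv A [] = ring_inverse (A [])"
  by (subst rinv_unfold) (simp add: rinv_step_def)

lemma rinv_cong_short:
  assumes "\<And>ys. length ys \<le> n \<Longrightarrow> A ys = A' ys"
  shows "length xs \<le> n \<Longrightarrow> rinv A xs = rinv A' xs"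
proof (induction "length xs" arbitrary: xs rule: less_induct)
  case less
  have eA: "A [] = A' []" using assms by simp
  have "mprod (without_const A) (rinv A) xs = mprod (without_const A') (rinv A') xs"
    unfolding mprod_def
  proof (rule sum.cong[OF refl])
    fix k assume k: "k \<in> {0..length xs}"
    show "without_const A (take k xs) * rinv A (drop k xs) = without_const A' (take k xs) * rinv A' (drop k xs)"
    proof (cases "k = 0")
      case True
      then show ?thesis by (simp add: without_const_def)
    next
      case False
      then have "length (drop k xs) < length xs" using k by auto
      then have "rinv A (drop k xs) = rinv A' (drop k xs)" using less by simp
      moreover have "without_const A (take k xs) = without_const A' (take k xs)" using assms less(2) unfolding without_const_def by simp
      ultimately show ?thesis by simp
    qed
  qed
  then have "rinv_step A (rinv A) xs = rinv_step A' (rinv A') xs" unfolding rinv_step_def eA by simp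
  then show ?case by (simp only: rinv_unfold[symmetric])
qed

context
  fixes sc :: "'k::field_char_0 \<Rightarrow> 'b::ring_1 \<Rightarrow> 'b"
  assumes alg: "algebra_over sc"
begin

lemma multilinear_without_const: "multilinear sc A m \<Longrightarrow> multilinear sc (without_const A) m"
proof (cases m)
  case 0
  then show ?thesis using multilinear_0 by simp
next
  case (Suc m')
  assume "multilinear sc A m"
  then show ?thesis by (subst multilinear_cong[where H'=A]) (auto simp: without_const_def Suc)
qed

lemma multilinear_rinv:
  assumes A: "\<And>m. m \<le> n \<Longrightarrow> multilinear sc A m"
  shows "m \<le> n \<Longrightarrow> multilinear sc (rinv A) m"
proof (induction m rule: less_induct)
  case (less m)
  show ?case
  proof (cases m)
    case 0
    then show ?thesis using multilinear_0 by simp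
  next
    case (Suc m')
    have "multilinear sc (mprod (without_const A) (rinv A)) m"
    proof (rule multilinear_mprod_const0_left[OF alg])
      show "without_const A [] = 0" by (simp add: without_const_def)
      show "multilinear sc (without_const A) k" if "k \<le> m" for k using A[of k] multilinear_without_const that less(2) by simp
      show "multilinear sc (rinv A) k" if "k < m" for k using less(1)[of k] that less(2) by simp
    qed
    then have L: "multilinear sc (\<lambda>xs. - (ring_inverse (A []) * mprod (without_const A) (rinv A) xs)) m"
      using multilinear_neg[OF alg] multilinear_mult_left[OF alg] by blast
    have E: "\<And>xs. length xs = m \<Longrightarrow> rinv A xs = - (ring_inverse (A []) * mprod (without_const A) (rinv A) xs)"
    proof -
      fix xs :: "'b list" assume "length xs = m"
      then have "xs \<noteq> []" using Suc by auto
      then show "rinv A xs = - (ring_inverse (A []) * mprod (without_const A) (rinv A) xs)"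
        by (subst rinv_unfold) (simp add: rinv_step_def)
    qed
    show ?thesis by (subst multilinear_cong[OF E]) (simp_all add: L)
  qed
qed

lemma minv_eq:
  assumes A: "A \<in> G_inv sc" shows "minv sc A = rinv A"
  unfolding minv_def
proof (rule the_equality)
  have u: "is_unit_ring (A [])" using A by (rule G_inv_unit)
  have "\<forall>n. multilinear sc (rinv A) n" using multilinear_rinv G_inv_multilinear[OF A] by blast
  then show "rinv A \<in> Mult sc \<and> mprod A (rinv A) = mone \<and> mprod (rinv A) A = mone"
    using rinv_right[of A, OF u] rinv_left[of A, OF u] mem_Mult_iff by blast
  fix h assume "h \<in> Mult sc \<and> mprod A h = mone \<and> mprod h A = mone"
  then show "h = rinv A" using rinv_unique_right[of A, OF u] by blast
qed

end


section \<open>Compositional inverses and the S-transform\<close>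

lemma mcomp_mIprod: "c [] = 0 \<Longrightarrow> mcomp (mprod mI F) c = mprod c (mcomp F c)"
  by (simp add: mcomp_mprod mcomp_mI_left)

text \<open>Since \<open>(I \<cdot> F) \<circ> (I \<cdot> S) = I \<cdot> S \<cdot> (F \<circ> (I \<cdot> S))\<close>, the S-transform is the fixed point
  of \<open>S \<mapsto> (F \<circ> (I \<cdot> S))\<^sup>-\<^sup>1\<close>; its coefficient of length n only involves those of S of smaller length.\<close>

definition S_series :: "('b::ring_1 list \<Rightarrow> 'b) \<Rightarrow> 'b list \<Rightarrow> 'b" where
  "S_series F = (SOME s. rinv (mcomp F (mprod mI s)) = s)"

lemma local_S_series_step: "local_op (\<lambda>s. rinv (mcomp F (mprod mI s)))"
  unfolding local_op_def
proof (intro allI impI)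
  fix s t :: "'a list \<Rightarrow> 'a" and xs :: "'a list"
  assume h: "\<forall>ys. length ys < length xs \<longrightarrow> s ys = t ys"
  have "mcomp F (mprod mI s) ys = mcomp F (mprod mI t) ys" if "length ys \<le> length xs" for ys
  proof (rule mcomp_cong_short)
    fix zs :: "'a list" assume z: "zs \<noteq> []" "length zs \<le> length ys"
    then obtain z zs' where zs: "zs = z # zs'" by (cases zs) auto
    have "length zs' < length xs" using z that zs by simp
    then show "mprod mI s zs = mprod mI t zs" using h zs by simp
  qed
  then show "rinv (mcomp F (mprod mI s)) xs = rinv (mcomp F (mprod mI t)) xs"
    using rinv_cong_short[of "length xs" "mcomp F (mprod mI s)" "mcomp F (mprod mI t)" xs] by simp
qed

lemma S_series_fixpoint: "rinv (mcomp F (mprod mI (S_series F))) = S_series F"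
  unfolding S_series_def by (rule local_op_some_fixpoint[OF local_S_series_step])

lemma S_series_Nil: "S_series F [] = ring_inverse (F [])"
  using rinv_Nil[of "mcomp F (mprod mI (S_series F))"] S_series_fixpoint[of F] by simp

lemma mcomp_mIprod_S_series:
  assumes "is_unit_ring (F [])" shows "mcomp (mprod mI F) (mprod mI (S_series F)) = mI"
proof -
  have "mcomp (mprod mI F) (mprod mI (S_series F))
      = mprod mI (mprod (S_series F) (mcomp F (mprod mI (S_series F))))"
    by (simp add: mcomp_mIprod mprod_assoc)
  also have "mprod (S_series F) (mcomp F (mprod mI (S_series F))) = mone"
    using rinv_left[of "mcomp F (mprod mI (S_series F))"] S_series_fixpoint[of F] assms by simp
  finally show ?thesis by simp
qed

lemma mcomp_eq_rinv_if_mIprod_inverse: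
  assumes "mcomp (mprod mI A) (mprod mI C) = mI" and "is_unit_ring (C [])"
  shows "mcomp A (mprod mI C) = rinv C"
proof -
  have "mprod mI (mprod C (mcomp A (mprod mI C))) = mprod mI mone"
    using assms(1) by (simp add: mcomp_mIprod mprod_assoc)
  then have "mprod C (mcomp A (mprod mI C)) = mone" by (rule mIprod_cancel)
  then show ?thesis by (rule rinv_unique_right[of C, OF assms(2)])
qed

lemma bij_mult_unit: "is_unit_ring u \<Longrightarrow> bij (\<lambda>x. x * (u::'b::ring_1))"
proof -
  assume u: "is_unit_ring u"
  have i: "u * ring_inverse u = 1" "ring_inverse u * u = 1" using ring_inverse_cancel[OF u] by simp_all
  show ?thesis
  proof (rule bijI)
    show "inj (\<lambda>x. x * u)"
    proof (rule injI)
      fix x y assume "x * u = y * u"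
      then have "x * u * ring_inverse u = y * u * ring_inverse u" by simp
      then show "x = y" using i by (simp add: mult.assoc)
    qed
    show "surj (\<lambda>x. x * u)"
    proof (rule surjI)
      fix y show "y * ring_inverse u * u = y" using i by (simp add: mult.assoc)
    qed
  qed
qed

context
  fixes sc :: "'k::field_char_0 \<Rightarrow> 'b::ring_1 \<Rightarrow> 'b"
  assumes alg: "algebra_over sc"
begin

lemma multilinear_mIprod: "(\<And>n. multilinear sc A n) \<Longrightarrow> multilinear sc (mprod mI A) n"
  by (rule multilinear_mprod[OF alg]) (simp_all add: multilinear_mI[OF alg])

lemma mIprod_in_Mult: "A \<in> Mult sc \<Longrightarrow> mprod mI A \<in> Mult sc"
  using multilinear_mIprod unfolding mem_Mult_iff by blast

lemma multilinear_S_series: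
  assumes F: "F \<in> G_inv sc" shows "multilinear sc (S_series F) n"
proof (induction n rule: less_induct)
  case (less n)
  have mlF: "\<And>m. multilinear sc F m" using F by (rule G_inv_multilinear)
  have "multilinear sc (mcomp F (mprod mI (S_series F))) m" if "m \<le> n" for m
  proof (rule multilinear_mcomp[OF alg mlF])
    fix m' assume m': "0 < m'" "m' \<le> m"
    show "multilinear sc (mprod mI (S_series F)) m'"
    proof (rule multilinear_mprod_const0_left[OF alg])
      show "mI [] = 0" by simp
      show "multilinear sc mI k" for k by (rule multilinear_mI[OF alg])
      show "multilinear sc (S_series F) k" if "k < m'" for k using less that m' \<open>m \<le> n\<close> by simp
    qed
  qed
  then have "multilinear sc (rinv (mcomp F (mprod mI (S_series F)))) n"
    using multilinear_rinv[OF alg] by blast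
  then show ?case using S_series_fixpoint[of F] by simp
qed

lemma S_series_in_G_inv: assumes F: "F \<in> G_inv sc" shows "S_series F \<in> G_inv sc"
proof -
  have u: "is_unit_ring (F [])" using F by (rule G_inv_unit)
  have "S_series F \<in> Mult sc" using multilinear_S_series[OF F] mem_Mult_iff by blast
  moreover have "is_unit_ring (S_series F [])"
    using S_series_Nil[of F] is_unit_ring_ring_inverse[OF u] by simp
  ultimately show ?thesis unfolding G_inv_def by blast
qed

lemma mcomp_left_inverse_unique:
  assumes F: "F \<in> G_inv sc" and K: "additive_args K" and "mcomp K (mprod mI F) = mI"
  shows "K = mprod mI (S_series F)"
proof -
  have "is_unit_ring (F [])" using F by (rule G_inv_unit)
  then have "mcomp (mprod mI F) (mprod mI (S_series F)) = mI" by (rule mcomp_mIprod_S_series)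
  then have "K = mcomp K (mcomp (mprod mI F) (mprod mI (S_series F)))"
    using mcomp_mI_right[OF K] by simp
  also have "\<dots> = mcomp (mcomp K (mprod mI F)) (mprod mI (S_series F))"
    using mcomp_assoc[OF K] by simp
  finally show ?thesis using assms(3) mcomp_mI_left[of "mprod mI (S_series F)"] by simp
qed

lemma mcomp_S_series_mIprod:
  assumes F: "F \<in> G_inv sc" shows "mcomp (mprod mI (S_series F)) (mprod mI F) = mI"
proof -
  have S: "S_series F \<in> G_inv sc" by (rule S_series_in_G_inv[OF F])
  then have uS: "is_unit_ring (S_series F [])" by (rule G_inv_unit)
  have uF: "is_unit_ring (F [])" using F by (rule G_inv_unit)
  have "additive_args (mprod mI F)"
    by (rule additive_args_mIprod[OF G_inv_additive_args[OF F]])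
  then have "mprod mI F = mprod mI (S_series (S_series F))"
    by (rule mcomp_left_inverse_unique[OF S _ mcomp_mIprod_S_series[of F, OF uF]])
  then show ?thesis using mcomp_mIprod_S_series[of "S_series F", OF uS] by simp
qed

lemma mIprod_in_G_dif: assumes F: "F \<in> G_inv sc" shows "mprod mI F \<in> G_dif sc"
proof -
  have u: "is_unit_ring (F [])" using F by (rule G_inv_unit)
  have "mprod mI F \<in> Mult sc" using F unfolding G_inv_def by (simp add: mIprod_in_Mult)
  moreover have "(\<lambda>x. mprod mI F [x]) = (\<lambda>x. x * F [])" by simp
  ultimately show ?thesis unfolding G_dif_def using bij_mult_unit[OF u] by simp
qed

lemma cinv_mIprod:
  assumes F: "F \<in> G_inv sc" shows "cinv sc (mprod mI F) = mprod mI (S_series F)"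
  unfolding cinv_def
proof (rule the_equality)
  have "is_unit_ring (F [])" using F by (rule G_inv_unit)
  then show "mprod mI (S_series F) \<in> G_dif sc \<and> mcomp (mprod mI F) (mprod mI (S_series F)) = mI
      \<and> mcomp (mprod mI (S_series F)) (mprod mI F) = mI"
    using mIprod_in_G_dif[OF S_series_in_G_inv[OF F]] mcomp_mIprod_S_series mcomp_S_series_mIprod[OF F]
    by blast
  fix h assume h: "h \<in> G_dif sc \<and> mcomp (mprod mI F) h = mI \<and> mcomp h (mprod mI F) = mI"
  then have "additive_args h" unfolding G_dif_def using additive_args_if_Mult by blast
  then show "h = mprod mI (S_series F)" using h mcomp_left_inverse_unique[OF F] by blast
qed

lemma S_transform_mIprod:
  assumes F: "F \<in> G_inv sc" shows "S_transform sc (mprod mI F) = S_series F"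
  unfolding S_transform_def cinv_mIprod[OF F]
proof (rule the_equality)
  show "S_series F \<in> G_inv sc \<and> mprod mI (S_series F) = mprod mI (S_series F)"
    using S_series_in_G_inv[OF F] by simp
  fix F' assume "F' \<in> G_inv sc \<and> mprod mI (S_series F) = mprod mI F'"
  then show "F' = S_series F" using mIprod_cancel by metis
qed

end


section \<open>Planar binary trees\<close>

definition ones_after :: "'b::ring_1 list \<Rightarrow> 'b list" where
  "ones_after xs = concat (map (\<lambda>x. [x, 1]) xs)"

definition ones_before :: "'b::ring_1 list \<Rightarrow> 'b list" where
  "ones_before xs = concat (map (\<lambda>x. [1, x]) xs)"

lemma ones_after_Nil[simp]: "ones_after [] = []" and ones_after_Cons[simp]: "ones_after (x # xs) = x # 1 # ones_after xs"
  unfolding ones_after_def by simp_all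

lemma ones_before_Nil[simp]: "ones_before [] = []" and ones_before_Cons[simp]: "ones_before (x # xs) = 1 # x # ones_before xs"
  unfolding ones_before_def by simp_all

lemma length_ones_after[simp]: "length (ones_after xs) = 2 * length xs"
  by (induction xs) simp_all

lemma length_ones_before[simp]: "length (ones_before xs) = 2 * length xs"
  by (induction xs) simp_all

lemma take_ones_after: "take (2 * k) (ones_after xs) = ones_after (take k xs)"
proof (induction xs arbitrary: k)
  case Nil
  then show ?case by simp
next
  case (Cons x xs)
  then show ?case by (cases k) simp_all
qed

lemma drop_ones_after: "drop (2 * k) (ones_after xs) = ones_after (drop k xs)"
proof (induction xs arbitrary: k)
  case Nil
  then show ?case by simp
next
  case (Cons x xs)
  then show ?case by (cases k) simp_all
qed

lemma take_ones_before: "take (2 * k) (ones_before xs) = ones_before (take k xs)"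
proof (induction xs arbitrary: k)
  case Nil
  then show ?case by simp
next
  case (Cons x xs)
  then show ?case by (cases k) simp_all
qed

lemma drop_ones_before: "drop (2 * k) (ones_before xs) = ones_before (drop k xs)"
proof (induction xs arbitrary: k)
  case Nil
  then show ?case by simp
next
  case (Cons x xs)
  then show ?case by (cases k) simp_all
qed

lemma ones_before_nth_odd: "i < length xs \<Longrightarrow> ones_before xs ! (2 * i + 1) = xs ! i"
proof (induction xs arbitrary: i)
  case Nil
  then show ?case by simp
next
  case (Cons x xs)
  then show ?case by (cases i) simp_all
qed

lemma ones_before_nth_even: "i < length xs \<Longrightarrow> ones_before xs ! (2 * i) = 1"
proof (induction xs arbitrary: i)
  case Nil
  then show ?case by simp
next
  case (Cons x xs)
  then show ?case by (cases i) simp_all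
qed

lemma Cons_one_ones_after: "1 # ones_after xs = ones_before xs @ [1]"
  by (induction xs) simp_all

lemma ones_after_Cons': "ones_after (y # ys) = (y # ones_before ys) @ [1]"
  using Cons_one_ones_after[of ys] by simp

lemma size_Rt[simp]: "size (Rt t) = 2 * size t"
  by (induction t) simp_all

lemma cup_args_Rt_Node:
  "cup_args f g (Rt (Node a b)) zs =
    (f (zs ! 0 # cup_args g f (Rt a) (take (2 * size a) (drop 1 zs))) * zs ! (2 * size a + 1)) #
    cup_args f g (Rt b) (drop (2 * size a + 2) zs)"
proof -
  have "cup g f (Node Leaf (Rt a)) (take (2 * size a + 1) zs) =
      f ((1 * take (2 * size a + 1) zs ! 0) # cup_args g f (Rt a) (drop 1 (take (2 * size a + 1) zs)))"
    by simp
  also have "\<dots> = f (zs ! 0 # cup_args g f (Rt a) (take (2 * size a) (drop 1 zs)))"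
    by (simp add: drop_take)
  finally have e: "cup g f (Node Leaf (Rt a)) (take (2 * size a + 1) zs) = f (zs ! 0 # cup_args g f (Rt a) (take (2 * size a) (drop 1 zs)))" .
  show ?thesis using e by (simp add: numeral_2_eq_2)
qed

lemma cup_args_Rt_ones_after:
  assumes "size a \<le> length xs"
  shows "cup_args f g (Rt (Node a b)) (ones_after (x # xs)) =
    (f (x # cup_args g f (Rt a) (ones_before (take (size a) xs))) * 1) # cup_args f g (Rt b) (ones_after (drop (size a) xs))"
proof -
  let ?m = "size a"
  have t: "take (2 * ?m) (drop 1 (ones_after (x # xs))) = ones_before (take ?m xs)"
  proof -
    have "drop 1 (ones_after (x # xs)) = ones_before xs @ [1]" using Cons_one_ones_after[of xs] by simp
    then show ?thesis using assms by (simp add: take_ones_before)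
  qed
  have n: "ones_after (x # xs) ! (2 * ?m + 1) = 1"
  proof -
    have "ones_after (x # xs) ! (2 * ?m + 1) = (1 # ones_after xs) ! (2 * ?m)" by simp
    also have "\<dots> = (ones_before xs @ [1]) ! (2 * ?m)" by (simp only: Cons_one_ones_after)
    also have "\<dots> = 1"
    proof (cases "?m < length xs")
      case True
      then show ?thesis by (simp add: nth_append ones_before_nth_even)
    next
      case False
      then have "?m = length xs" using assms by simp
      then show ?thesis by (simp add: nth_append)
    qed
    finally show ?thesis .
  qed
  have d: "drop (2 * ?m + 2) (ones_after (x # xs)) = ones_after (drop ?m xs)"
    using drop_ones_after[of ?m xs] by simp
  show ?thesis unfolding cup_args_Rt_Node t n d by simp
qed

lemma cup_args_Rt_ones_before:
  assumes "size c < length ys"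
  shows "cup_args f g (Rt (Node c d)) (ones_before ys) =
    (f (1 # cup_args g f (Rt c) (ones_after (take (size c) ys))) * ys ! (size c)) # cup_args f g (Rt d) (ones_before (drop (size c + 1) ys))"
proof -
  let ?m = "size c"
  obtain y ys' where ys: "ys = y # ys'" using assms by (cases ys) auto
  have t: "take (2 * ?m) (drop 1 (ones_before ys)) = ones_after (take ?m ys)"
  proof -
    have "drop 1 (ones_before ys) = y # ones_before ys'" using ys by simp
    moreover have "take (2 * ?m) (ones_after ys) = take (2 * ?m) ((y # ones_before ys') @ [1])"
      by (simp only: ys ones_after_Cons')
    moreover have "\<dots> = take (2 * ?m) (y # ones_before ys')"
      by (subst take_append) (use assms ys in simp)
    ultimately show ?thesis by (simp add: take_ones_after)
  qed
  have n0: "ones_before ys ! 0 = 1" using ys by simp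
  have n: "ones_before ys ! (2 * ?m + 1) = ys ! ?m" using ones_before_nth_odd assms by simp
  have d: "drop (2 * ?m + 2) (ones_before ys) = ones_before (drop (?m + 1) ys)"
    using drop_ones_before[of "?m + 1" ys] by simp
  show ?thesis unfolding cup_args_Rt_Node t n n0 d by simp
qed

definition trees_of_size :: "nat \<Rightarrow> tree set" where
  "trees_of_size n = {t. size t = n}"

lemma size_eq_0_iff: "size t = 0 \<longleftrightarrow> t = Leaf"
  by (cases t) simp_all

lemma trees_of_size_0: "trees_of_size 0 = {Leaf}"
  unfolding trees_of_size_def using size_eq_0_iff by auto

lemma trees_of_size_Suc:
  "trees_of_size (Suc n) = (\<lambda>p. Node (fst (snd p)) (snd (snd p))) ` (SIGMA m:{0..n}. trees_of_size m \<times> trees_of_size (n - m))"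
proof
  show "trees_of_size (Suc n) \<subseteq> (\<lambda>p. Node (fst (snd p)) (snd (snd p))) ` (SIGMA m:{0..n}. trees_of_size m \<times> trees_of_size (n - m))"
  proof
    fix t assume "t \<in> trees_of_size (Suc n)"
    then have t: "size t = Suc n" unfolding trees_of_size_def by simp
    then obtain a b where ab: "t = Node a b" by (cases t) auto
    then have "size a + size b = n" using t by simp
    then have "(size a, (a, b)) \<in> (SIGMA m:{0..n}. trees_of_size m \<times> trees_of_size (n - m))" unfolding trees_of_size_def by auto
    then show "t \<in> (\<lambda>p. Node (fst (snd p)) (snd (snd p))) ` (SIGMA m:{0..n}. trees_of_size m \<times> trees_of_size (n - m))"
      using ab by force
  qed
  show "(\<lambda>p. Node (fst (snd p)) (snd (snd p))) ` (SIGMA m:{0..n}. trees_of_size m \<times> trees_of_size (n - m)) \<subseteq> trees_of_size (Suc n)"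
    unfolding trees_of_size_def by auto
qed

lemma inj_on_trees_of_size_Suc:
  "inj_on (\<lambda>p. Node (fst (snd p)) (snd (snd p))) (SIGMA m:{0..n}. trees_of_size m \<times> trees_of_size (n - m))"
  unfolding inj_on_def trees_of_size_def by auto

lemma finite_trees_of_size: "finite (trees_of_size n)"
proof (induction n rule: less_induct)
  case (less n)
  show ?case
  proof (cases n)
    case 0
    then show ?thesis by (simp add: trees_of_size_0)
  next
    case (Suc n')
    have "finite (SIGMA m:{0..n'}. trees_of_size m \<times> trees_of_size (n' - m))"
      using less Suc by (intro finite_SigmaI) auto
    then show ?thesis unfolding Suc trees_of_size_Suc by blast
  qed
qed

lemma sum_trees_of_size_Suc:
  "(\<Sum>t\<in>trees_of_size (Suc n). phi t) = (\<Sum>m=0..n. \<Sum>a\<in>trees_of_size m. \<Sum>b\<in>trees_of_size (n - m). phi (Node a b))"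
proof -
  have "(\<Sum>t\<in>trees_of_size (Suc n). phi t) = (\<Sum>p\<in>(SIGMA m:{0..n}. trees_of_size m \<times> trees_of_size (n - m)). phi (Node (fst (snd p)) (snd (snd p))))"
    unfolding trees_of_size_Suc by (subst sum.reindex[OF inj_on_trees_of_size_Suc]) simp
  also have "\<dots> = (\<Sum>m=0..n. \<Sum>q\<in>trees_of_size m \<times> trees_of_size (n - m). phi (Node (fst q) (snd q)))"
    by (subst sum.Sigma) (simp_all add: finite_trees_of_size case_prod_unfold)
  also have "\<dots> = (\<Sum>m=0..n. \<Sum>a\<in>trees_of_size m. \<Sum>b\<in>trees_of_size (n - m). phi (Node a b))"
    by (simp add: sum.cartesian_product case_prod_unfold)
  finally show ?thesis .
qed

text \<open>One level below the root, \<open>cup\<close> swaps the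
  roles of f and g, and since \<open>R(\<sigma> \<or> \<tau>) = (| \<or> R \<sigma>) \<or> R \<tau>\<close> the arguments there are padded as
  \<open>1, x\<^sub>1, 1, x\<^sub>2, \<dots>\<close> instead of \<open>x\<^sub>1, 1, x\<^sub>2, 1, \<dots>\<close>: this is the dual tree sum.\<close>

definition tree_sum :: "('b::ring_1 list \<Rightarrow> 'b) \<Rightarrow> ('b list \<Rightarrow> 'b) \<Rightarrow> ('b list \<Rightarrow> 'b) \<Rightarrow> 'b list \<Rightarrow> 'b" where
  "tree_sum f g H xs = (\<Sum>c\<in>trees_of_size (length xs). H (cup_args f g (Rt c) (ones_after xs)))"

definition dual_tree_sum :: "('b::ring_1 list \<Rightarrow> 'b) \<Rightarrow> ('b list \<Rightarrow> 'b) \<Rightarrow> ('b list \<Rightarrow> 'b) \<Rightarrow> 'b list \<Rightarrow> 'b" where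
  "dual_tree_sum f g H ys = (\<Sum>a\<in>trees_of_size (length ys). H (cup_args g f (Rt a) (ones_before ys)))"

lemma tree_sum_Nil: "tree_sum f g H [] = H []"
  unfolding tree_sum_def by (simp add: trees_of_size_0)

lemma dual_tree_sum_Nil: "dual_tree_sum f g H [] = H []"
  unfolding dual_tree_sum_def by (simp add: trees_of_size_0)

lemma boxconv_eq_tree_sum:
  "boxconv f g = tree_sum f g g"
proof
  fix xs :: "'a list"
  show "boxconv f g xs = tree_sum f g g xs"
  proof (cases "xs = []")
    case True
    then show ?thesis by (simp add: boxconv_def tree_sum_Nil)
  next
    case False
    have "boxconv f g xs = (\<Sum>t\<in>trees_of_size (length xs). cup f g (Rt t) (ones_after xs))"
      using False unfolding boxconv_def trees_of_size_def ones_after_def by simp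
    also have "\<dots> = (\<Sum>t\<in>trees_of_size (length xs). g (cup_args f g (Rt t) (ones_after xs)))"
    proof (rule sum.cong[OF refl])
      fix t assume "t \<in> trees_of_size (length xs)"
      then have "t \<noteq> Leaf" using False unfolding trees_of_size_def by auto
      then obtain a b where "t = Node a b" by (cases t) auto
      then show "cup f g (Rt t) (ones_after xs) = g (cup_args f g (Rt t) (ones_after xs))" by simp
    qed
    finally show ?thesis unfolding tree_sum_def .
  qed
qed

lemma tree_sum_Cons:
  assumes H: "additive_args H" and f: "\<And>x w. f (x # w) = x * F w"
  shows "tree_sum f g H (x # xs) = (\<Sum>m=0..length xs.
    tree_sum f g (\<lambda>ws. H ((x * dual_tree_sum f g F (take m xs)) # ws)) (drop m xs))"
proof -
  let ?n = "length xs"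
  let ?arg = "\<lambda>m a b. (x * F (cup_args g f (Rt a) (ones_before (take m xs))))
    # cup_args f g (Rt b) (ones_after (drop m xs))"
  have "tree_sum f g H (x # xs) = (\<Sum>m=0..?n. \<Sum>a\<in>trees_of_size m. \<Sum>b\<in>trees_of_size (?n - m).
      H (cup_args f g (Rt (Node a b)) (ones_after (x # xs))))"
    unfolding tree_sum_def by (simp add: sum_trees_of_size_Suc)
  also have "\<dots> = (\<Sum>m=0..?n. \<Sum>a\<in>trees_of_size m. \<Sum>b\<in>trees_of_size (?n - m). H (?arg m a b))"
  proof (intro sum.cong refl)
    fix m a b assume "m \<in> {0..?n}" "a \<in> trees_of_size m"
    then show "H (cup_args f g (Rt (Node a b)) (ones_after (x # xs))) = H (?arg m a b)"
      using cup_args_Rt_ones_after[of a xs f g b x] f by (simp add: trees_of_size_def)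
  qed
  also have "\<dots> = (\<Sum>m=0..?n. \<Sum>b\<in>trees_of_size (?n - m). \<Sum>a\<in>trees_of_size m. H (?arg m a b))"
    by (rule sum.cong[OF refl]) (rule sum.swap)
  also have "\<dots> = (\<Sum>m=0..?n. \<Sum>b\<in>trees_of_size (?n - m).
      H ((x * dual_tree_sum f g F (take m xs)) # cup_args f g (Rt b) (ones_after (drop m xs))))"
    by (intro sum.cong refl)
      (simp add: additive_args_sum_Cons[OF H finite_trees_of_size] dual_tree_sum_def sum_distrib_left)
  finally show ?thesis
    unfolding tree_sum_def by simp
qed

lemma tree_sum_eq_mcomp:
  assumes "additive_args H" and f: "\<And>x w. f (x # w) = x * F w"
  shows "tree_sum f g H xs = mcomp H (mprod mI (dual_tree_sum f g F)) xs"
  using assms(1)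
proof (induction "length xs" arbitrary: xs H rule: less_induct)
  case less
  show ?case
  proof (cases xs)
    case Nil
    then show ?thesis by (simp add: tree_sum_Nil)
  next
    case (Cons x xs')
    let ?p = "mprod mI (dual_tree_sum f g F)"
    have "tree_sum f g H xs = (\<Sum>m=0..length xs'.
        tree_sum f g (\<lambda>ws. H ((x * dual_tree_sum f g F (take m xs')) # ws)) (drop m xs'))"
      unfolding Cons by (rule tree_sum_Cons[OF less.prems f])
    also have "\<dots> = (\<Sum>m=0..length xs'. mcomp (\<lambda>ws. H (?p (x # take m xs') # ws)) ?p (drop m xs'))"
      using less.hyps additive_args_Cons[OF less.prems] Cons by (intro sum.cong refl) simp
    also have "\<dots> = mcomp H ?p xs"
      by (simp only: Cons mcomp_Cons)
    finally show ?thesis .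
  qed
qed

lemma dual_tree_sum_Cons:
  assumes H: "additive_args H" and g: "\<And>w. g (1 # w) = G w"
  shows "dual_tree_sum f g H (y # ys) = (\<Sum>m=0..length ys.
    dual_tree_sum f g (\<lambda>ws. H ((tree_sum f g G (take m (y # ys)) * (y # ys) ! m) # ws)) (drop m ys))"
proof -
  let ?n = "length ys"
  let ?arg = "\<lambda>m c d. (G (cup_args f g (Rt c) (ones_after (take m (y # ys)))) * (y # ys) ! m)
    # cup_args g f (Rt d) (ones_before (drop m ys))"
  have "dual_tree_sum f g H (y # ys) = (\<Sum>m=0..?n. \<Sum>c\<in>trees_of_size m. \<Sum>d\<in>trees_of_size (?n - m).
      H (cup_args g f (Rt (Node c d)) (ones_before (y # ys))))"
    unfolding dual_tree_sum_def by (simp add: sum_trees_of_size_Suc)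
  also have "\<dots> = (\<Sum>m=0..?n. \<Sum>c\<in>trees_of_size m. \<Sum>d\<in>trees_of_size (?n - m). H (?arg m c d))"
  proof (intro sum.cong refl)
    fix m c d assume "m \<in> {0..?n}" "c \<in> trees_of_size m"
    then show "H (cup_args g f (Rt (Node c d)) (ones_before (y # ys))) = H (?arg m c d)"
      using cup_args_Rt_ones_before[of c "y # ys" g f d] g by (simp add: trees_of_size_def)
  qed
  also have "\<dots> = (\<Sum>m=0..?n. \<Sum>d\<in>trees_of_size (?n - m). \<Sum>c\<in>trees_of_size m. H (?arg m c d))"
    by (rule sum.cong[OF refl]) (rule sum.swap)
  also have "\<dots> = (\<Sum>m=0..?n. \<Sum>d\<in>trees_of_size (?n - m).
      H ((tree_sum f g G (take m (y # ys)) * (y # ys) ! m) # cup_args g f (Rt d) (ones_before (drop m ys))))"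
    by (intro sum.cong refl)
      (simp add: additive_args_sum_Cons[OF H finite_trees_of_size] tree_sum_def sum_distrib_right)
  finally show ?thesis
    unfolding dual_tree_sum_def by simp
qed

lemma dual_tree_sum_eq_mcomp:
  assumes "additive_args H" and g: "\<And>w. g (1 # w) = G w"
  shows "dual_tree_sum f g H ys = mcomp H (mprod (tree_sum f g G) mI) ys"
  using assms(1)
proof (induction "length ys" arbitrary: ys H rule: less_induct)
  case less
  show ?case
  proof (cases ys)
    case Nil
    then show ?thesis by (simp add: dual_tree_sum_Nil)
  next
    case (Cons y ys')
    let ?q = "mprod (tree_sum f g G) mI"
    have q: "?q (y # take m ys') = tree_sum f g G (take m ys) * ys ! m" if "m \<le> length ys'" for m
      using that mprod_mI_snoc[of "tree_sum f g G" "take m ys" "ys ! m"]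
      by (simp add: Cons take_Suc_conv_app_nth[symmetric])
    have "dual_tree_sum f g H ys = (\<Sum>m=0..length ys'.
        dual_tree_sum f g (\<lambda>ws. H ((tree_sum f g G (take m ys) * ys ! m) # ws)) (drop m ys'))"
      unfolding Cons by (rule dual_tree_sum_Cons[of H g G, OF less.prems g])
    also have "\<dots> = (\<Sum>m=0..length ys'. mcomp (\<lambda>ws. H (?q (y # take m ys') # ws)) ?q (drop m ys'))"
      using less.hyps additive_args_Cons[OF less.prems] q Cons by (intro sum.cong refl) simp
    also have "\<dots> = mcomp H ?q ys"
      by (simp only: Cons mcomp_Cons)
    finally show ?thesis .
  qed
qed


section \<open>The S-transform of the boxed convolution\<close>

lemma boxconv_tree_equations:
  assumes F: "additive_args F" and G: "additive_args G"
  defines "X \<equiv> dual_tree_sum (mprod mI F) (mprod mI G) F"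
    and "Y \<equiv> tree_sum (mprod mI F) (mprod mI G) G"
  shows "X = mcomp F (mprod Y mI)" and "Y = mcomp G (mprod mI X)"
    and "boxconv (mprod mI F) (mprod mI G) = mprod mI (mprod X Y)"
proof -
  have f: "\<And>x w. mprod mI F (x # w) = x * F w" and g: "\<And>w. mprod mI G (1 # w) = G w"
    by simp_all
  show "X = mcomp F (mprod Y mI)"
    unfolding X_def Y_def using dual_tree_sum_eq_mcomp[where g="mprod mI G" and G=G, OF F g] by blast
  show Y: "Y = mcomp G (mprod mI X)"
    unfolding X_def Y_def using tree_sum_eq_mcomp[where f="mprod mI F" and F=F, OF G f] by blast
  have "boxconv (mprod mI F) (mprod mI G) = mcomp (mprod mI G) (mprod mI X)"
    unfolding boxconv_eq_tree_sum X_def using tree_sum_eq_mcomp[where f="mprod mI F" and F=F, OF additive_args_mIprod[OF G] f] by blast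
  also have "\<dots> = mprod mI (mprod X Y)"
    by (simp add: mcomp_mIprod Y mprod_assoc)
  finally show "boxconv (mprod mI F) (mprod mI G) = mprod mI (mprod X Y)" .
qed

context
  fixes sc :: "'k::field_char_0 \<Rightarrow> 'b::ring_1 \<Rightarrow> 'b"
  assumes alg: "algebra_over sc"
begin

lemma multilinear_tree_pair:
  assumes F: "\<And>n. multilinear sc F n" and G: "\<And>n. multilinear sc G n"
    and X: "X = mcomp F (mprod Y mI)" and Y: "Y = mcomp G (mprod mI X)"
  shows "multilinear sc X n \<and> multilinear sc Y n"
proof (induction n rule: less_induct)
  case (less n)
  have "multilinear sc X n" unfolding X
  proof (rule multilinear_mcomp[OF alg F])
    fix m assume "0 < m" "m \<le> n"
    then show "multilinear sc (mprod Y mI) m"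
      using less by (intro multilinear_mprod_const0_right[OF alg] multilinear_mI[OF alg]) auto
  qed
  moreover have "multilinear sc Y n" unfolding Y
  proof (rule multilinear_mcomp[OF alg G])
    fix m assume "0 < m" "m \<le> n"
    then show "multilinear sc (mprod mI X) m"
      using less by (intro multilinear_mprod_const0_left[OF alg] multilinear_mI[OF alg]) auto
  qed
  ultimately show ?case ..
qed

lemma mprod_tree_pair_in_G_inv:
  assumes F: "F \<in> G_inv sc" and G: "G \<in> G_inv sc"
    and X: "X = mcomp F (mprod Y mI)" and Y: "Y = mcomp G (mprod mI X)"
  shows "mprod X Y \<in> G_inv sc"
proof -
  have "\<And>n. multilinear sc (mprod X Y) n"
    using multilinear_tree_pair[OF G_inv_multilinear[OF F] G_inv_multilinear[OF G] X Y]
    by (intro multilinear_mprod[OF alg]) auto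
  moreover have "X [] = F []" "Y [] = G []"
    by (subst X, simp) (subst Y, simp)
  then have "is_unit_ring (mprod X Y [])"
    using G_inv_unit[OF F] G_inv_unit[OF G] by (simp add: is_unit_ring_mult)
  ultimately show ?thesis
    unfolding G_inv_def mem_Mult_iff by blast
qed

text \<open>By the two equations, \<open>(G \<cdot> I) \<circ> (I \<cdot> X) = Y \<cdot> I \<cdot> X = (I \<cdot> F) \<circ> (Y \<cdot> I)\<close>.
  Composing with \<open>S\<^sub>F\<close>, which satisfies \<open>S\<^sub>F \<circ> (I \<cdot> F) = F\<^sup>-\<^sup>1\<close>, leaves
  \<open>F\<^sup>-\<^sup>1 \<circ> (Y \<cdot> I)\<close>, the multiplicative inverse of \<open>X = F \<circ> (Y \<cdot> I)\<close>.\<close>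

lemma tree_pair_left_inverse:
  assumes F: "F \<in> G_inv sc"
    and X: "X = mcomp F (mprod Y mI)" and Y: "Y = mcomp G (mprod mI X)"
  shows "mcomp (mprod mI (mcomp (S_series F) (mprod G mI))) (mprod mI X) = mI"
proof -
  let ?p = "mprod mI X" and ?c = "mprod Y mI" and ?Sf = "S_series F"
  have uF: "is_unit_ring (F [])" using F by (rule G_inv_unit)
  have uX: "is_unit_ring (X [])" using uF X by simp
  have Sf: "additive_args ?Sf" by (rule G_inv_additive_args[OF S_series_in_G_inv[OF alg F]])
  have Sf_F: "mcomp ?Sf (mprod mI F) = rinv F"
    by (rule mcomp_eq_rinv_if_mIprod_inverse[OF mcomp_S_series_mIprod[OF alg F] uF])
  have "mcomp (mprod G mI) ?p = mprod Y ?p"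
    by (simp add: mcomp_mprod Y mcomp_mI_left)
  also have "\<dots> = mcomp (mprod mI F) ?c"
    by (simp add: mcomp_mIprod X mprod_assoc)
  finally have "mcomp (mcomp ?Sf (mprod G mI)) ?p = mcomp (rinv F) ?c"
    by (simp add: mcomp_assoc[OF Sf] Sf_F[symmetric])
  also have "\<dots> = rinv X"
  proof (rule rinv_unique_left[of X, OF uX])
    show "mprod (mcomp (rinv F) ?c) X = mone"
      using rinv_left[of F, OF uF] by (simp add: X mcomp_mprod[symmetric])
  qed
  finally show ?thesis
    using rinv_right[of X, OF uX] by (simp add: mcomp_mIprod mprod_assoc)
qed

lemma S_series_tree_pair:
  assumes F: "F \<in> G_inv sc" and G: "G \<in> G_inv sc" and XY: "mprod X Y \<in> G_inv sc"
    and X: "X = mcomp F (mprod Y mI)" and Y: "Y = mcomp G (mprod mI X)"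
  shows "S_series (mprod X Y)
    = mprod (S_series G) (mcomp (S_series F) (mprod (mprod (rinv (S_series G)) mI) (S_series G)))"
proof -
  let ?Sg = "S_series G"
  let ?q = "mprod mI (mcomp (S_series F) (mprod G mI))"
  define K where "K = mcomp ?q (mprod mI ?Sg)"
  have Sg: "?Sg \<in> G_inv sc" by (rule S_series_in_G_inv[OF alg G])
  have uSg: "is_unit_ring (?Sg [])" and uG: "is_unit_ring (G [])"
    using G_inv_unit[OF Sg] G_inv_unit[OF G] by auto
  note ml = G_inv_multilinear
  have ml_q: "\<And>n. multilinear sc ?q n"
    using ml[OF F] ml[OF G] multilinear_mI[OF alg] multilinear_S_series[OF alg F]
    by (intro multilinear_mIprod[OF alg] multilinear_mcomp[OF alg] multilinear_mprod[OF alg]) auto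
  then have q: "additive_args ?q" using additive_args_if_multilinear by blast
  have gi: "additive_args (mprod mI ?Sg)"
    by (rule additive_args_mIprod[OF G_inv_additive_args[OF Sg]])
  have "\<And>n. multilinear sc K n"
    unfolding K_def by (rule multilinear_mcomp[OF alg ml_q multilinear_mIprod[OF alg ml[OF Sg]]])
  then have "additive_args K" using additive_args_if_multilinear by blast
  moreover have "mcomp K (mprod mI (mprod X Y)) = mI"
  proof -
    have "mprod mI (mprod X Y) = mcomp (mprod mI G) (mprod mI X)"
      by (simp add: mcomp_mIprod Y mprod_assoc)
    then have "mcomp K (mprod mI (mprod X Y))
        = mcomp ?q (mcomp (mcomp (mprod mI ?Sg) (mprod mI G)) (mprod mI X))"
      unfolding K_def by (simp add: mcomp_assoc q gi)
    then show ?thesis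
      using mcomp_S_series_mIprod[OF alg G] tree_pair_left_inverse[OF F X Y] by (simp add: mcomp_mI_left)
  qed
  ultimately have "K = mprod mI (S_series (mprod X Y))"
    by (rule mcomp_left_inverse_unique[OF alg XY])
  moreover have "mcomp G (mprod mI ?Sg) = rinv ?Sg"
    by (rule mcomp_eq_rinv_if_mIprod_inverse[OF mcomp_mIprod_S_series[of G, OF uG] uSg])
  then have "K = mprod mI (mprod ?Sg (mcomp (S_series F) (mprod (mprod (rinv ?Sg) mI) ?Sg)))"
    unfolding K_def using G_inv_additive_args[OF S_series_in_G_inv[OF alg F]]
    by (simp add: mcomp_mIprod mcomp_assoc mcomp_mprod mcomp_mI_left mprod_assoc)
  ultimately show ?thesis by (metis mIprod_cancel)
qed

end

theorem theorem3p2: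
  fixes scale :: "'k::field_char_0 \<Rightarrow> 'b::ring_1 \<Rightarrow> 'b"
    and f g :: "'b list \<Rightarrow> 'b"
  assumes "algebra_over scale"
    and "f \<in> G_I scale" and "g \<in> G_I scale"
  shows "boxconv f g \<in> G_I scale
    \<and> S_transform scale (boxconv f g)
        = mprod (S_transform scale g)
            (mcomp (S_transform scale f)
               (mprod (mprod (minv scale (S_transform scale g)) mI) (S_transform scale g)))"
proof -
  note alg = assms(1)
  obtain F G where F: "F \<in> G_inv scale" and f: "f = mprod mI F"
    and G: "G \<in> G_inv scale" and g: "g = mprod mI G"
    using assms(2,3) unfolding G_I_def by blast
  define X where "X = dual_tree_sum f g F"
  define Y where "Y = tree_sum f g G"
  note tree_eqs = boxconv_tree_equations[OF G_inv_additive_args[OF F] G_inv_additive_args[OF G],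
      folded f g, folded X_def Y_def]
  have XY: "mprod X Y \<in> G_inv scale"
    by (rule mprod_tree_pair_in_G_inv[OF alg F G tree_eqs(1,2)])
  have "boxconv f g \<in> G_I scale"
    unfolding tree_eqs(3) G_I_def using XY by blast
  moreover have "S_transform scale (boxconv f g) = S_series (mprod X Y)"
    unfolding tree_eqs(3) by (rule S_transform_mIprod[OF alg XY])
  ultimately show ?thesis
    using S_series_tree_pair[OF alg F G XY tree_eqs(1,2)] S_series_in_G_inv[OF alg G]
    by (simp add: f g S_transform_mIprod[OF alg] F G minv_eq[OF alg])
qed

end
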